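(* Assume $\beta\ge0$, $\zeta_l>0$, $\zeta_r>0$ and $N_1\ge2$. Then $e^{tl}\to0$ as $t\to\infty$, the quantity $\mathcal{J}_n=\sum_{\nu\in M_n}2\,\mathrm{Im}\langle e_{\nu_+},R_\infty e_\nu\rangle$ is independent of $n\in\{1,\dots,N_1-1\}$, and its common value $\mathcal{J}(N_1,\dots,N_d)$ satisfies $$\mathcal{J}(N_1,\dots,N_d)=4(\alpha_{in}^l\alpha_{out}^r-\alpha_{out}^l\alpha_{in}^r)\int_0^\infty\mathrm{Tr}\,P_1e^{tl}(P_{N_1})\,dt=-4(\alpha_{in}^l\alpha_{out}^r-\alpha_{out}^l\alpha_{in}^r)\,\mathrm{Tr}\,P_1l^{-1}(P_{N_1}).$$
   Context: Let $d\ge1$ and $N_1,\dots,N_d\in\mathbb{N}$. Let $\mathfrak L=\{1,\dots,N_1\}\times\cdots\times\{1,\dots,N_d\}$, with elements $\nu=(\nu_1,\dots,\nu_d)$; $NN(\nu)$ is the set of nearest neighbours of $\nu$ in $\mathfrak L$ (points of $\mathfrak L$ at Euclidean distance $1$). For $i=1,\dots,N_1$ let $M_i=\{\nu\in\mathfrak L:\nu_1=i\}$, and for $\nu\notin M_{N_1}$ let $\nu_+=(\nu_1+1,\nu_2,\dots,\nu_d)$. Let $\{e_\nu\}_{\nu\in\mathfrak L}$ be the standard basis of $\mathbb{C}^{|\mathfrak L|}$, $p_\nu=|e_\nu\rangle\langle e_\nu|$, $P_1=\sum_{\nu\in M_1}p_\nu$, $P_{N_1}=\sum_{\nu\in M_{N_1}}p_\nu$.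 Given a bounded real $v$ on $\mathfrak L$, let $(h\psi)(\nu)=-\sum_{\mu\in NN(\nu)}\psi(\mu)+v(\nu)\psi(\nu)$. Let $\alpha_{in}^l,\alpha_{out}^l,\alpha_{in}^r,\alpha_{out}^r,\beta\ge0$, $\zeta_l=\alpha_{in}^l+\alpha_{out}^l$, $\zeta_r=\alpha_{in}^r+\alpha_{out}^r$. Define $l$ on $M_{|\mathfrak L|}(\mathbb{C})$ by $l(a)=-i[h,a]-\zeta_l\{P_1,a\}-\zeta_r\{P_{N_1},a\}+\beta\left(\sum_{\nu\in\mathfrak L}p_\nu ap_\nu-a\right)$, and $R_\infty=\int_0^\infty e^{tl}(2\alpha_{in}^lP_1+2\alpha_{in}^rP_{N_1})\,dt$. *)

theory Defs
  imports "HOL-Analysis.Analysis"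
begin

text \<open>Lattice points are lists of length d = length N, where N = [N_1,...,N_d].
  Operators on C^|L| are represented as functions site => site => complex
  (matrix entries), with indices meaningful on the lattice only.\<close>

type_synonym site = "nat list"
type_synonym cmat = "site \<Rightarrow> site \<Rightarrow> complex"

definition lattice :: "nat list \<Rightarrow> site set" where
  "lattice N = {\<nu>. length \<nu> = length N \<and> (\<forall>i<length N. 1 \<le> \<nu>!i \<and> \<nu>!i \<le> N!i)}"

definition nn :: "nat list \<Rightarrow> site \<Rightarrow> site \<Rightarrow> bool" where
  "nn N \<mu> \<nu> \<longleftrightarrow> \<mu> \<in> lattice N \<and> \<nu> \<in> lattice N \<and>
     (\<Sum>i<length N. (int (\<mu>!i) - int (\<nu>!i))^2) = 1"

definition supported :: "nat list \<Rightarrow> cmat \<Rightarrow> bool" where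
  "supported N a \<longleftrightarrow> (\<forall>\<mu> \<nu>. \<mu> \<notin> lattice N \<or> \<nu> \<notin> lattice N \<longrightarrow> a \<mu> \<nu> = 0)"

definition mmul :: "nat list \<Rightarrow> cmat \<Rightarrow> cmat \<Rightarrow> cmat" where
  "mmul N a b = (\<lambda>\<mu> \<nu>. \<Sum>\<kappa>\<in>lattice N. a \<mu> \<kappa> * b \<kappa> \<nu>)"

definition tr :: "nat list \<Rightarrow> cmat \<Rightarrow> complex" where
  "tr N a = (\<Sum>\<nu>\<in>lattice N. a \<nu> \<nu>)"

definition ham :: "nat list \<Rightarrow> (site \<Rightarrow> real) \<Rightarrow> cmat" where
  "ham N v = (\<lambda>\<nu> \<mu>. if \<nu> \<in> lattice N \<and> \<mu> \<in> lattice N then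
      (if nn N \<nu> \<mu> then -1 else 0) + (if \<mu> = \<nu> then complex_of_real (v \<nu>) else 0) else 0)"

definition pr :: "site \<Rightarrow> cmat" where
  "pr \<kappa> = (\<lambda>\<mu> \<nu>. if \<mu> = \<kappa> \<and> \<nu> = \<kappa> then 1 else 0)"

text \<open>M_i = {nu in L. nu_1 = i} (first coordinate is index 0 of the list).\<close>
definition slice :: "nat list \<Rightarrow> nat \<Rightarrow> site set" where
  "slice N i = {\<nu> \<in> lattice N. \<nu>!0 = i}"

definition projS :: "site set \<Rightarrow> cmat" where
  "projS S = (\<lambda>\<mu> \<nu>. \<Sum>\<kappa>\<in>S. pr \<kappa> \<mu> \<nu>)"

definition P1 :: "nat list \<Rightarrow> cmat" where
  "P1 N = projS (slice N 1)"

definition PN :: "nat list \<Rightarrow> cmat" where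
  "PN N = projS (slice N (N!0))"

definition lind :: "nat list \<Rightarrow> (site \<Rightarrow> real) \<Rightarrow> real \<Rightarrow> real \<Rightarrow> real \<Rightarrow> cmat \<Rightarrow> cmat" where
  "lind N v zl zr \<beta> a = (\<lambda>\<mu> \<nu>.
      - \<i> * (mmul N (ham N v) a \<mu> \<nu> - mmul N a (ham N v) \<mu> \<nu>)
      - complex_of_real zl * (mmul N (P1 N) a \<mu> \<nu> + mmul N a (P1 N) \<mu> \<nu>)
      - complex_of_real zr * (mmul N (PN N) a \<mu> \<nu> + mmul N a (PN N) \<mu> \<nu>)
      + complex_of_real \<beta> * ((\<Sum>\<kappa>\<in>lattice N. mmul N (mmul N (pr \<kappa>) a) (pr \<kappa>) \<mu> \<nu>) - a \<mu> \<nu>))"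

definition expl :: "nat list \<Rightarrow> (site \<Rightarrow> real) \<Rightarrow> real \<Rightarrow> real \<Rightarrow> real \<Rightarrow> real \<Rightarrow> cmat \<Rightarrow> cmat" where
  "expl N v zl zr \<beta> t a = (\<lambda>\<mu> \<nu>.
      \<Sum>k. complex_of_real (t ^ k / fact k) * ((lind N v zl zr \<beta> ^^ k) a \<mu> \<nu>))"

definition Rinf :: "nat list \<Rightarrow> (site \<Rightarrow> real) \<Rightarrow> real \<Rightarrow> real \<Rightarrow> real \<Rightarrow> real \<Rightarrow> real \<Rightarrow> cmat" where
  "Rinf N v zl zr \<beta> ail air = (\<lambda>\<mu> \<nu>. integral {0..} (\<lambda>t.
      expl N v zl zr \<beta> t (\<lambda>x y. 2 * complex_of_real ail * P1 N x y + 2 * complex_of_real air * PN N x y) \<mu> \<nu>))"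

definition splus :: "site \<Rightarrow> site" where
  "splus \<nu> = \<nu>[0 := \<nu>!0 + 1]"

definition current :: "nat list \<Rightarrow> (site \<Rightarrow> real) \<Rightarrow> real \<Rightarrow> real \<Rightarrow> real \<Rightarrow> real \<Rightarrow> real \<Rightarrow> nat \<Rightarrow> real" where
  "current N v zl zr \<beta> ail air n =
     (\<Sum>\<nu>\<in>slice N n. 2 * Im (Rinf N v zl zr \<beta> ail air (splus \<nu>) \<nu>))"

definition linv :: "nat list \<Rightarrow> (site \<Rightarrow> real) \<Rightarrow> real \<Rightarrow> real \<Rightarrow> real \<Rightarrow> cmat \<Rightarrow> cmat" where
  "linv N v zl zr \<beta> b = (THE a. supported N a \<and> lind N v zl zr \<beta> a = b)"

end

theory Submission
  imports Defs
begin

text \<open>The squared Hilbert-Schmidt norm of an orbit of \<open>e\<^sup>t\<^sup>l\<close> has derivative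
  \<open>-2 \<Sum> \<gamma>\<^sub>\<mu>\<^sub>\<nu> |a\<^sub>\<mu>\<^sub>\<nu>|\<^sup>2 \<le> 0\<close>, where \<open>\<gamma>\<close> are the damping rates of \<open>l\<close>. By LaSalle's invariance
  principle every orbit tends to \<open>0\<close>: a limit point generates an orbit of constant norm, which must
  vanish on the layer \<open>M\<^sub>1\<close> (damped at rate \<open>\<ge> \<zeta>\<^sub>l > 0\<close>) and then, through the nearest-neighbour
  hopping, on all further layers. In finite dimension the decay is exponential, so \<open>R\<^sub>\<infinity>\<close> exists and
  \<open>l\<^sup>-\<^sup>1 = -\<integral>\<^sub>0\<^sup>\<infinity> e\<^sup>t\<^sup>l dt\<close>. Summing the diagonal of \<open>l(R\<^sub>\<infinity>) = -(2\<alpha>\<^sup>l\<^sub>i\<^sub>n P\<^sub>1 + 2\<alpha>\<^sup>r\<^sub>i\<^sub>n P\<^sub>N\<^sub>1)\<close> over the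
  layers \<open>\<le> n\<close> gives \<open>J\<^sub>n = 2\<alpha>\<^sup>l\<^sub>i\<^sub>n |M\<^sub>1| - 2\<zeta>\<^sub>l Tr P\<^sub>1 R\<^sub>\<infinity>\<close>, independent of \<open>n\<close>.\<close>

lemma finite_lattice: "finite (lattice N)"
proof -
  have "lattice N \<subseteq> {xs. set xs \<subseteq> {0..Max (set N)} \<and> length xs = length N}"
    unfolding lattice_def
    by (auto simp: in_set_conv_nth) (metis Max_ge List.finite_set dual_order.trans nth_mem)
  moreover have "finite {xs. set xs \<subseteq> {0..Max (set N)} \<and> length xs = length N}"
    by (rule finite_lists_length_eq) simp
  ultimately show ?thesis by (rule finite_subset)
qed

lemma slice_subset_lattice: "slice N i \<subseteq> lattice N"
  unfolding slice_def by auto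

lemma finite_slice: "finite (slice N i)"
  using finite_subset[OF slice_subset_lattice finite_lattice] .

lemma sum_delta_conj:
  "finite A \<Longrightarrow> (\<Sum>x\<in>A. if x = c \<and> P then f x else 0) = (if c \<in> A \<and> P then f c else 0)"
  by (cases P) (simp_all add: sum.delta')

lemma sum_of_bool_eq_mult:
  fixes f :: "'a \<Rightarrow> 'b::semiring_1"
  assumes "finite A" "c \<in> A"
  shows "(\<Sum>x\<in>A. of_bool (x = c) * f x) = f c"
  by (subst sum.remove[OF assms]) (auto intro!: sum.neutral)

lemma projS_apply: "finite S \<Longrightarrow> projS S \<mu> \<nu> = (if \<mu> = \<nu> \<and> \<mu> \<in> S then 1 else 0)"
  unfolding projS_def pr_def by (cases "\<mu> = \<nu>") (auto simp: sum.delta' intro: sum.neutral)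

lemma P1_apply: "P1 N \<mu> \<nu> = (if \<mu> = \<nu> \<and> \<mu> \<in> slice N 1 then 1 else 0)"
  unfolding P1_def by (simp add: projS_apply finite_slice)

lemma PN_apply: "PN N \<mu> \<nu> = (if \<mu> = \<nu> \<and> \<mu> \<in> slice N (N!0) then 1 else 0)"
  unfolding PN_def by (simp add: projS_apply finite_slice)

lemma mmul_projS_left:
  assumes "S \<subseteq> lattice N" "finite S"
  shows "mmul N (projS S) a \<mu> \<nu> = (if \<mu> \<in> S then a \<mu> \<nu> else 0)"
proof -
  have "mmul N (projS S) a \<mu> \<nu> = (\<Sum>\<kappa>\<in>lattice N. if \<kappa> = \<mu> \<and> \<mu> \<in> S then a \<kappa> \<nu> else 0)"
    unfolding mmul_def using assms(2) by (intro sum.cong) (auto simp: projS_apply)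
  then show ?thesis using assms(1) by (auto simp: sum_delta_conj finite_lattice)
qed

lemma mmul_projS_right:
  assumes "S \<subseteq> lattice N" "finite S"
  shows "mmul N a (projS S) \<mu> \<nu> = (if \<nu> \<in> S then a \<mu> \<nu> else 0)"
proof -
  have "mmul N a (projS S) \<mu> \<nu> = (\<Sum>\<kappa>\<in>lattice N. if \<kappa> = \<nu> \<and> \<nu> \<in> S then a \<mu> \<kappa> else 0)"
    unfolding mmul_def using assms(2) by (intro sum.cong) (auto simp: projS_apply)
  then show ?thesis using assms(1) by (auto simp: sum_delta_conj finite_lattice)
qed

lemma mmul_pr_left:
  assumes "\<kappa> \<in> lattice N"
  shows "mmul N (pr \<kappa>) a \<mu> \<nu> = (if \<mu> = \<kappa> then a \<kappa> \<nu> else 0)"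
proof -
  have "mmul N (pr \<kappa>) a \<mu> \<nu> = (\<Sum>x\<in>lattice N. if x = \<kappa> \<and> \<mu> = \<kappa> then a x \<nu> else 0)"
    unfolding mmul_def pr_def by (intro sum.cong) auto
  then show ?thesis using assms by (simp add: sum_delta_conj finite_lattice)
qed

lemma mmul_pr_right:
  assumes "\<kappa> \<in> lattice N"
  shows "mmul N a (pr \<kappa>) \<mu> \<nu> = (if \<nu> = \<kappa> then a \<mu> \<kappa> else 0)"
proof -
  have "mmul N a (pr \<kappa>) \<mu> \<nu> = (\<Sum>x\<in>lattice N. if x = \<kappa> \<and> \<nu> = \<kappa> then a \<mu> x else 0)"
    unfolding mmul_def pr_def by (intro sum.cong) auto
  then show ?thesis using assms by (simp add: sum_delta_conj finite_lattice)
qed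

lemma dephasing_apply:
  "(\<Sum>\<kappa>\<in>lattice N. mmul N (mmul N (pr \<kappa>) a) (pr \<kappa>) \<mu> \<nu>)
     = (if \<mu> = \<nu> \<and> \<mu> \<in> lattice N then a \<mu> \<mu> else 0)"
proof -
  have "(\<Sum>\<kappa>\<in>lattice N. mmul N (mmul N (pr \<kappa>) a) (pr \<kappa>) \<mu> \<nu>)
      = (\<Sum>\<kappa>\<in>lattice N. if \<mu> = \<kappa> then (if \<mu> = \<nu> then a \<mu> \<nu> else 0) else 0)"
    by (intro sum.cong refl) (auto simp: mmul_pr_left mmul_pr_right)
  then show ?thesis by (simp add: finite_lattice sum.delta)
qed

definition damping :: "nat list \<Rightarrow> real \<Rightarrow> real \<Rightarrow> real \<Rightarrow> site \<Rightarrow> site \<Rightarrow> real" where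
  "damping N zl zr \<beta> \<mu> \<nu> =
     zl * (of_bool (\<mu> \<in> slice N 1) + of_bool (\<nu> \<in> slice N 1))
     + zr * (of_bool (\<mu> \<in> slice N (N!0)) + of_bool (\<nu> \<in> slice N (N!0)))
     + \<beta> * of_bool (\<mu> \<noteq> \<nu>)"

lemma damping_nonneg: "zl \<ge> 0 \<Longrightarrow> zr \<ge> 0 \<Longrightarrow> \<beta> \<ge> 0 \<Longrightarrow> damping N zl zr \<beta> \<mu> \<nu> \<ge> 0"
  unfolding damping_def by simp

lemma damping_commute: "damping N zl zr \<beta> \<mu> \<nu> = damping N zl zr \<beta> \<nu> \<mu>"
  unfolding damping_def by (simp add: add.commute eq_commute)

lemma ham_outside: "\<mu> \<notin> lattice N \<or> \<kappa> \<notin> lattice N \<Longrightarrow> ham N v \<mu> \<kappa> = 0"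
  unfolding ham_def by auto

lemma nn_commute: "nn N \<mu> \<kappa> = nn N \<kappa> \<mu>"
  unfolding nn_def by (auto simp: power2_commute)

lemma ham_commute: "ham N v \<mu> \<kappa> = ham N v \<kappa> \<mu>"
  unfolding ham_def by (auto simp: nn_commute)

lemma cnj_ham: "cnj (ham N v \<mu> \<kappa>) = ham N v \<mu> \<kappa>"
  unfolding ham_def by auto

lemma supported_outside: "supported N a \<Longrightarrow> \<mu> \<notin> lattice N \<or> \<nu> \<notin> lattice N \<Longrightarrow> a \<mu> \<nu> = 0"
  unfolding supported_def by blast

lemma mmul_outside:
  assumes "supported N a" "\<mu> \<notin> lattice N \<or> \<nu> \<notin> lattice N"
  shows "mmul N (ham N v) a \<mu> \<nu> = 0" "mmul N a (ham N v) \<mu> \<nu> = 0"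
  using assms unfolding mmul_def by (auto simp: ham_outside supported_outside)

lemma lind_apply:
  assumes "supported N a"
  shows "lind N v zl zr \<beta> a \<mu> \<nu> = (if \<mu> \<in> lattice N \<and> \<nu> \<in> lattice N then
     - \<i> * (mmul N (ham N v) a \<mu> \<nu> - mmul N a (ham N v) \<mu> \<nu>)
     - complex_of_real (damping N zl zr \<beta> \<mu> \<nu>) * a \<mu> \<nu> else 0)"
  using assms unfolding lind_def P1_def PN_def
  by (auto simp: mmul_projS_left mmul_projS_right slice_subset_lattice finite_slice
      dephasing_apply damping_def algebra_simps mmul_outside supported_outside)

lemma lind_outside:
  "supported N a \<Longrightarrow> \<mu> \<notin> lattice N \<or> \<nu> \<notin> lattice N \<Longrightarrow> lind N v zl zr \<beta> a \<mu> \<nu> = 0"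
  by (auto simp: lind_apply)

lemma supported_lind: "supported N a \<Longrightarrow> supported N (lind N v zl zr \<beta> a)"
  using lind_outside unfolding supported_def by blast

definition lind_coeff :: "nat list \<Rightarrow> (site \<Rightarrow> real) \<Rightarrow> real \<Rightarrow> real \<Rightarrow> real \<Rightarrow> site \<Rightarrow> site \<Rightarrow> site \<Rightarrow> site \<Rightarrow> complex" where
  "lind_coeff N v zl zr \<beta> \<mu> \<nu> \<kappa> \<rho> =
     - \<i> * (ham N v \<mu> \<kappa> * of_bool (\<rho> = \<nu>) - of_bool (\<kappa> = \<mu>) * ham N v \<rho> \<nu>)
     - of_bool (\<kappa> = \<mu> \<and> \<rho> = \<nu>) * complex_of_real (damping N zl zr \<beta> \<mu> \<nu>)"

lemma lind_eq_coeff_sum: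
  assumes a: "supported N a" and \<mu>: "\<mu> \<in> lattice N" and \<nu>: "\<nu> \<in> lattice N"
  shows "lind N v zl zr \<beta> a \<mu> \<nu>
     = (\<Sum>\<kappa>\<in>lattice N. \<Sum>\<rho>\<in>lattice N. lind_coeff N v zl zr \<beta> \<mu> \<nu> \<kappa> \<rho> * a \<kappa> \<rho>)"
proof -
  let ?L = "lattice N" and ?h = "ham N v" and ?\<gamma> = "complex_of_real (damping N zl zr \<beta> \<mu> \<nu>)"
  have fin: "finite ?L" by (rule finite_lattice)
  have left: "(\<Sum>\<kappa>\<in>?L. \<Sum>\<rho>\<in>?L. ?h \<mu> \<kappa> * of_bool (\<rho> = \<nu>) * a \<kappa> \<rho>) = mmul N ?h a \<mu> \<nu>"
  proof -
    have "(\<Sum>\<kappa>\<in>?L. \<Sum>\<rho>\<in>?L. ?h \<mu> \<kappa> * of_bool (\<rho> = \<nu>) * a \<kappa> \<rho>)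
        = (\<Sum>\<kappa>\<in>?L. \<Sum>\<rho>\<in>?L. of_bool (\<rho> = \<nu>) * (?h \<mu> \<kappa> * a \<kappa> \<rho>))"
      by (simp add: mult_ac)
    then show ?thesis using fin \<nu> by (simp add: mmul_def sum_of_bool_eq_mult)
  qed
  have right: "(\<Sum>\<kappa>\<in>?L. \<Sum>\<rho>\<in>?L. of_bool (\<kappa> = \<mu>) * ?h \<rho> \<nu> * a \<kappa> \<rho>) = mmul N a ?h \<mu> \<nu>"
  proof -
    have "(\<Sum>\<kappa>\<in>?L. \<Sum>\<rho>\<in>?L. of_bool (\<kappa> = \<mu>) * ?h \<rho> \<nu> * a \<kappa> \<rho>)
        = (\<Sum>\<kappa>\<in>?L. of_bool (\<kappa> = \<mu>) * (\<Sum>\<rho>\<in>?L. a \<kappa> \<rho> * ?h \<rho> \<nu>))"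
      by (simp add: sum_distrib_left mult_ac)
    then show ?thesis using fin \<mu> by (simp add: mmul_def sum_of_bool_eq_mult)
  qed
  have diag: "(\<Sum>\<kappa>\<in>?L. \<Sum>\<rho>\<in>?L. of_bool (\<kappa> = \<mu> \<and> \<rho> = \<nu>) * ?\<gamma> * a \<kappa> \<rho>) = ?\<gamma> * a \<mu> \<nu>"
  proof -
    have "(\<Sum>\<kappa>\<in>?L. \<Sum>\<rho>\<in>?L. of_bool (\<kappa> = \<mu> \<and> \<rho> = \<nu>) * ?\<gamma> * a \<kappa> \<rho>)
        = (\<Sum>\<kappa>\<in>?L. of_bool (\<kappa> = \<mu>) * (\<Sum>\<rho>\<in>?L. of_bool (\<rho> = \<nu>) * (?\<gamma> * a \<kappa> \<rho>)))"
      by (simp add: of_bool_conj sum_distrib_left mult_ac)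
    then show ?thesis using fin \<mu> \<nu> by (simp add: sum_of_bool_eq_mult)
  qed
  have "(\<Sum>\<kappa>\<in>?L. \<Sum>\<rho>\<in>?L. lind_coeff N v zl zr \<beta> \<mu> \<nu> \<kappa> \<rho> * a \<kappa> \<rho>)
      = - \<i> * ((\<Sum>\<kappa>\<in>?L. \<Sum>\<rho>\<in>?L. ?h \<mu> \<kappa> * of_bool (\<rho> = \<nu>) * a \<kappa> \<rho>)
               - (\<Sum>\<kappa>\<in>?L. \<Sum>\<rho>\<in>?L. of_bool (\<kappa> = \<mu>) * ?h \<rho> \<nu> * a \<kappa> \<rho>))
        - (\<Sum>\<kappa>\<in>?L. \<Sum>\<rho>\<in>?L. of_bool (\<kappa> = \<mu> \<and> \<rho> = \<nu>) * ?\<gamma> * a \<kappa> \<rho>)"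
    unfolding lind_coeff_def sum_distrib_left sum_subtractf[symmetric]
    by (intro sum.cong refl) (simp add: algebra_simps)
  then show ?thesis unfolding left right diag lind_apply[OF a] using \<mu> \<nu> by simp
qed

lemma inner_ham_mmul_real:
  "cnj (\<Sum>\<mu>\<in>lattice N. \<Sum>\<nu>\<in>lattice N. cnj (a \<mu> \<nu>) * mmul N (ham N v) a \<mu> \<nu>)
     = (\<Sum>\<mu>\<in>lattice N. \<Sum>\<nu>\<in>lattice N. cnj (a \<mu> \<nu>) * mmul N (ham N v) a \<mu> \<nu>)"
    (is "cnj ?X = ?X")
proof -
  let ?L = "lattice N" and ?h = "ham N v"
  have X: "?X = (\<Sum>\<mu>\<in>?L. \<Sum>\<nu>\<in>?L. \<Sum>\<kappa>\<in>?L. cnj (a \<mu> \<nu>) * ?h \<mu> \<kappa> * a \<kappa> \<nu>)"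
    unfolding mmul_def by (simp add: sum_distrib_left mult.assoc)
  have "cnj ?X = (\<Sum>\<mu>\<in>?L. \<Sum>\<nu>\<in>?L. \<Sum>\<kappa>\<in>?L. cnj (a \<kappa> \<nu>) * ?h \<kappa> \<mu> * a \<mu> \<nu>)"
    unfolding X by (simp add: cnj_ham ham_commute mult_ac)
  also have "\<dots> = (\<Sum>\<nu>\<in>?L. \<Sum>\<mu>\<in>?L. \<Sum>\<kappa>\<in>?L. cnj (a \<kappa> \<nu>) * ?h \<kappa> \<mu> * a \<mu> \<nu>)"
    by (rule sum.swap)
  also have "\<dots> = (\<Sum>\<nu>\<in>?L. \<Sum>\<kappa>\<in>?L. \<Sum>\<mu>\<in>?L. cnj (a \<kappa> \<nu>) * ?h \<kappa> \<mu> * a \<mu> \<nu>)"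
    by (intro sum.cong refl sum.swap)
  also have "\<dots> = ?X"
    unfolding X by (rule sum.swap)
  finally show ?thesis .
qed

lemma inner_mmul_ham_real:
  "cnj (\<Sum>\<mu>\<in>lattice N. \<Sum>\<nu>\<in>lattice N. cnj (a \<mu> \<nu>) * mmul N a (ham N v) \<mu> \<nu>)
     = (\<Sum>\<mu>\<in>lattice N. \<Sum>\<nu>\<in>lattice N. cnj (a \<mu> \<nu>) * mmul N a (ham N v) \<mu> \<nu>)"
    (is "cnj ?Y = ?Y")
proof -
  let ?L = "lattice N" and ?h = "ham N v"
  have Y: "?Y = (\<Sum>\<mu>\<in>?L. \<Sum>\<nu>\<in>?L. \<Sum>\<kappa>\<in>?L. cnj (a \<mu> \<nu>) * a \<mu> \<kappa> * ?h \<kappa> \<nu>)"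
    unfolding mmul_def by (simp add: sum_distrib_left mult.assoc)
  have "cnj ?Y = (\<Sum>\<mu>\<in>?L. \<Sum>\<nu>\<in>?L. \<Sum>\<kappa>\<in>?L. cnj (a \<mu> \<kappa>) * a \<mu> \<nu> * ?h \<nu> \<kappa>)"
    unfolding Y by (simp add: cnj_ham ham_commute mult_ac)
  also have "\<dots> = ?Y"
    unfolding Y by (intro sum.cong refl sum.swap)
  finally show ?thesis .
qed

lemma lattice_first_coord_bounds: "N \<noteq> [] \<Longrightarrow> \<mu> \<in> lattice N \<Longrightarrow> 1 \<le> \<mu>!0 \<and> \<mu>!0 \<le> N!0"
  unfolding lattice_def by auto

lemma lattice_nonempty_site: "N \<noteq> [] \<Longrightarrow> \<mu> \<in> lattice N \<Longrightarrow> \<mu> \<noteq> []"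
  unfolding lattice_def by auto

lemma splus_in_lattice: "N \<noteq> [] \<Longrightarrow> \<mu> \<in> lattice N \<Longrightarrow> \<mu>!0 < N!0 \<Longrightarrow> splus \<mu> \<in> lattice N"
  unfolding lattice_def splus_def by (auto simp: nth_list_update)

lemma splus_nth_0: "\<mu> \<noteq> [] \<Longrightarrow> splus \<mu> ! 0 = \<mu>!0 + 1"
  unfolding splus_def by simp

lemma nn_splus:
  assumes N: "N \<noteq> []" and \<mu>: "\<mu> \<in> lattice N" and lt: "\<mu>!0 < N!0"
  shows "nn N \<mu> (splus \<mu>)"
proof -
  have len: "length \<mu> = length N" using \<mu> unfolding lattice_def by auto
  have "(\<Sum>i<length N. (int (\<mu>!i) - int (splus \<mu>!i))^2) = (\<Sum>i<length N. if i = 0 then 1 else 0)"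
    by (intro sum.cong refl) (auto simp: splus_def nth_list_update len)
  also have "\<dots> = 1" using N by (simp add: sum.delta)
  finally show ?thesis unfolding nn_def using \<mu> splus_in_lattice[OF N \<mu> lt] by simp
qed

lemma nn_eq_splus:
  assumes N: "N \<noteq> []" and \<mu>: "\<mu> \<in> lattice N" and \<kappa>: "\<kappa> \<in> lattice N"
    and nn: "nn N \<mu> \<kappa>" and gt: "\<kappa>!0 > \<mu>!0"
  shows "\<kappa> = splus \<mu>"
proof -
  define f where "f i = (int (\<mu>!i) - int (\<kappa>!i))^2" for i
  have f_nonneg: "f i \<ge> 0" for i unfolding f_def by simp
  have "f 0 \<ge> 1"
    using gt unfolding f_def by (simp add: power2_commute one_le_power)
  moreover have "(\<Sum>i<length N. f i) = f 0 + (\<Sum>i\<in>{..<length N} - {0}. f i)"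
    using N by (intro sum.remove) auto
  then have "f 0 + (\<Sum>i\<in>{..<length N} - {0}. f i) = 1"
    using nn unfolding nn_def f_def by simp
  moreover have "(\<Sum>i\<in>{..<length N} - {0}. f i) \<ge> 0"
    by (intro sum_nonneg f_nonneg)
  ultimately have f0: "f 0 = 1" and rest: "(\<Sum>i\<in>{..<length N} - {0}. f i) = 0"
    by linarith+
  have first: "\<kappa>!0 = \<mu>!0 + 1"
    using f0 gt unfolding f_def by (auto simp: power2_eq_1_iff)
  have others: "\<kappa>!i = \<mu>!i" if "i < length N" "i \<noteq> 0" for i
    using rest that sum_nonneg_eq_0_iff[of "{..<length N} - {0}" f] f_nonneg unfolding f_def by auto
  have len: "length \<kappa> = length N" "length \<mu> = length N"
    using \<mu> \<kappa> unfolding lattice_def by auto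
  show ?thesis
  proof (rule nth_equalityI)
    show "length \<kappa> = length (splus \<mu>)" using len by (simp add: splus_def)
    fix i assume "i < length \<kappa>"
    then show "\<kappa>!i = splus \<mu> ! i"
      using first others len by (cases "i = 0") (auto simp: splus_def)
  qed
qed

lemma lower_neighbour:
  assumes N: "N \<noteq> []" and \<mu>: "\<mu> \<in> lattice N" and j: "\<mu>!0 = Suc j" and j1: "j \<ge> 1"
  shows "\<mu>[0 := j] \<in> lattice N" "splus (\<mu>[0 := j]) = \<mu>" "\<mu>[0 := j] ! 0 = j"
proof -
  have len: "length \<mu> = length N" using \<mu> unfolding lattice_def by auto
  show "\<mu>[0 := j] \<in> lattice N" using \<mu> j j1 N len unfolding lattice_def
    by (auto simp: nth_list_update)
  show "splus (\<mu>[0 := j]) = \<mu>" unfolding splus_def using j N len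
    by (metis Suc_eq_plus1 length_greater_0_conv list_update_id list_update_overwrite nth_list_update_eq)
  show "\<mu>[0 := j] ! 0 = j" using N len by simp
qed

lemma ham_splus:
  assumes N: "N \<noteq> []" and \<mu>: "\<mu> \<in> lattice N" and lt: "\<mu>!0 < N!0"
  shows "ham N v \<mu> (splus \<mu>) = -1"
proof -
  have "splus \<mu> \<noteq> \<mu>"
    using splus_nth_0[OF lattice_nonempty_site[OF N \<mu>]] by (metis n_not_Suc_n Suc_eq_plus1)
  then show ?thesis
    unfolding ham_def using \<mu> splus_in_lattice[OF N \<mu> lt] nn_splus[OF N \<mu> lt] by simp
qed

lemma ham_row_sum_upper:
  assumes N: "N \<noteq> []" and \<mu>: "\<mu> \<in> lattice N" and lt: "\<mu>!0 < N!0"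
    and z: "\<And>\<kappa>. \<kappa> \<in> lattice N \<Longrightarrow> \<kappa>!0 \<le> \<mu>!0 \<Longrightarrow> b \<kappa> \<nu> = 0"
  shows "(\<Sum>\<kappa>\<in>lattice N. ham N v \<mu> \<kappa> * b \<kappa> \<nu>) = - b (splus \<mu>) \<nu>"
proof -
  have "(\<Sum>\<kappa>\<in>lattice N. ham N v \<mu> \<kappa> * b \<kappa> \<nu>)
     = ham N v \<mu> (splus \<mu>) * b (splus \<mu>) \<nu> + (\<Sum>\<kappa>\<in>lattice N - {splus \<mu>}. ham N v \<mu> \<kappa> * b \<kappa> \<nu>)"
    by (rule sum.remove[OF finite_lattice splus_in_lattice[OF N \<mu> lt]])
  also have "(\<Sum>\<kappa>\<in>lattice N - {splus \<mu>}. ham N v \<mu> \<kappa> * b \<kappa> \<nu>) = 0"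
  proof (intro sum.neutral ballI)
    fix \<kappa> assume \<kappa>: "\<kappa> \<in> lattice N - {splus \<mu>}"
    show "ham N v \<mu> \<kappa> * b \<kappa> \<nu> = 0"
    proof (cases "\<kappa>!0 \<le> \<mu>!0")
      case False
      then have "\<not> nn N \<mu> \<kappa>" "\<kappa> \<noteq> \<mu>" using nn_eq_splus[OF N \<mu>, of \<kappa>] \<kappa> by auto
      then show ?thesis unfolding ham_def by simp
    qed (use z \<kappa> in simp)
  qed
  finally show ?thesis using ham_splus[OF N \<mu> lt] by simp
qed

lemma lind_row_shift:
  assumes N: "N \<noteq> []" and b: "supported N b" and \<mu>: "\<mu> \<in> lattice N" and lt: "\<mu>!0 < N!0"
    and z: "\<And>\<kappa> \<nu>. \<kappa> \<in> lattice N \<Longrightarrow> \<kappa>!0 \<le> \<mu>!0 \<Longrightarrow> b \<kappa> \<nu> = 0"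
  shows "lind N v zl zr \<beta> b \<mu> \<nu> = \<i> * b (splus \<mu>) \<nu>"
proof (cases "\<nu> \<in> lattice N")
  case True
  have "mmul N (ham N v) b \<mu> \<nu> = - b (splus \<mu>) \<nu>"
    unfolding mmul_def by (rule ham_row_sum_upper[OF N \<mu> lt]) (rule z)
  moreover have "mmul N b (ham N v) \<mu> \<nu> = 0"
    unfolding mmul_def using z[OF \<mu>] by simp
  ultimately show ?thesis using True \<mu> z[OF \<mu>] by (simp add: lind_apply[OF b])
next
  case False
  then show ?thesis using b by (simp add: lind_outside supported_outside)
qed

lemma ham_across_layer:
  assumes N: "N \<noteq> []" and \<nu>: "\<nu> \<in> lattice N" "\<nu>!0 \<le> n" and \<kappa>: "\<kappa> \<in> lattice N" "n < \<kappa>!0"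
  shows "ham N v \<nu> \<kappa> = (if \<kappa> = splus \<nu> then -1 else 0)"
proof (cases "\<kappa> = splus \<nu>")
  case True
  then have "\<nu>!0 < N!0"
    using lattice_first_coord_bounds[OF N \<kappa>(1)]
      splus_nth_0[OF lattice_nonempty_site[OF N \<nu>(1)]] by simp
  then show ?thesis using True ham_splus[OF N \<nu>(1)] by simp
next
  case False
  then have "\<not> nn N \<nu> \<kappa>" "\<kappa> \<noteq> \<nu>"
    using nn_eq_splus[OF N \<nu>(1) \<kappa>(1)] \<nu>(2) \<kappa>(2) by auto
  then show ?thesis using False unfolding ham_def by simp
qed

text \<open>Bonds inside the layers \<open>\<le> n\<close> cancel by the symmetry of \<open>h\<close>, leaving the flux
  through the bonds between the layers \<open>n\<close> and \<open>n + 1\<close>.\<close>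

lemma commutator_flux:
  assumes N: "N \<noteq> []" and n: "n < N!0"
  shows "(\<Sum>\<nu>\<in>{\<nu>\<in>lattice N. \<nu>!0 \<le> n}. mmul N (ham N v) R \<nu> \<nu> - mmul N R (ham N v) \<nu> \<nu>)
     = (\<Sum>\<nu>\<in>slice N n. R \<nu> (splus \<nu>) - R (splus \<nu>) \<nu>)"
proof -
  let ?h = "ham N v" and ?c = "\<lambda>\<nu> \<kappa>. ham N v \<nu> \<kappa> * R \<kappa> \<nu> - R \<nu> \<kappa> * ham N v \<kappa> \<nu>"
  define U where "U = {\<nu>\<in>lattice N. \<nu>!0 \<le> n}"
  have UL: "U \<subseteq> lattice N" and fU: "finite U"
    unfolding U_def using finite_lattice by auto
  have inner: "(\<Sum>\<nu>\<in>U. \<Sum>\<kappa>\<in>U. ?c \<nu> \<kappa>) = 0"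
  proof -
    have "(\<Sum>\<nu>\<in>U. \<Sum>\<kappa>\<in>U. R \<nu> \<kappa> * ?h \<kappa> \<nu>) = (\<Sum>\<kappa>\<in>U. \<Sum>\<nu>\<in>U. R \<nu> \<kappa> * ?h \<kappa> \<nu>)"
      by (rule sum.swap)
    then show ?thesis by (simp add: sum_subtractf ham_commute mult.commute)
  qed
  have outer: "(\<Sum>\<kappa>\<in>lattice N - U. ?c \<nu> \<kappa>) = (if \<nu>!0 = n then R \<nu> (splus \<nu>) - R (splus \<nu>) \<nu> else 0)"
    if \<nu>: "\<nu> \<in> U" for \<nu>
  proof -
    have \<nu>L: "\<nu> \<in> lattice N" and le: "\<nu>!0 \<le> n" using \<nu> unfolding U_def by auto
    have "(\<Sum>\<kappa>\<in>lattice N - U. ?c \<nu> \<kappa>) = (\<Sum>\<kappa>\<in>lattice N - U. if \<kappa> = splus \<nu> then R \<nu> \<kappa> - R \<kappa> \<nu> else 0)"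
      using ham_across_layer[OF N \<nu>L le] ham_commute[of N v _ \<nu>] by (intro sum.cong) (auto simp: U_def)
    also have "\<dots> = (if splus \<nu> \<in> lattice N - U then R \<nu> (splus \<nu>) - R (splus \<nu>) \<nu> else 0)"
      using finite_lattice by (simp add: sum.delta')
    also have "splus \<nu> \<in> lattice N - U \<longleftrightarrow> \<nu>!0 = n \<and> n < N!0"
      using splus_in_lattice[OF N \<nu>L] lattice_first_coord_bounds[OF N]
        splus_nth_0[OF lattice_nonempty_site[OF N \<nu>L]] le unfolding U_def
      by (cases "\<nu>!0 = n") fastforce+
    finally show ?thesis using n by auto
  qed
  have "(\<Sum>\<nu>\<in>U. mmul N ?h R \<nu> \<nu> - mmul N R ?h \<nu> \<nu>) = (\<Sum>\<nu>\<in>U. \<Sum>\<kappa>\<in>lattice N. ?c \<nu> \<kappa>)"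
    unfolding mmul_def by (simp add: sum_subtractf)
  also have "\<dots> = (\<Sum>\<nu>\<in>U. \<Sum>\<kappa>\<in>U. ?c \<nu> \<kappa>) + (\<Sum>\<nu>\<in>U. \<Sum>\<kappa>\<in>lattice N - U. ?c \<nu> \<kappa>)"
    unfolding sum.distrib[symmetric]
    by (intro sum.cong refl) (simp add: sum.subset_diff[OF UL finite_lattice] add.commute)
  also have "\<dots> = (\<Sum>\<nu>\<in>U. if \<nu>!0 = n then R \<nu> (splus \<nu>) - R (splus \<nu>) \<nu> else 0)"
    by (simp add: inner outer)
  also have "\<dots> = (\<Sum>\<nu>\<in>{\<nu> \<in> U. \<nu>!0 = n}. R \<nu> (splus \<nu>) - R (splus \<nu>) \<nu>)"
    by (rule sum.inter_filter[OF fU, symmetric])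
  also have "{\<nu> \<in> U. \<nu>!0 = n} = slice N n"
    unfolding U_def slice_def by auto
  finally show ?thesis unfolding U_def .
qed

lemma has_vector_derivative_zero_of_constant:
  assumes d: "(f has_vector_derivative f') (at s)" and s: "s > 0"
    and c: "\<And>r. r > 0 \<Longrightarrow> f r = (k :: 'a :: real_normed_vector)"
  shows "f' = 0"
proof -
  have "(f has_vector_derivative 0) (at s)"
    by (rule has_vector_derivative_transform_within_open[of "\<lambda>r. k" _ _ "{0<..}"]) (use s c in auto)
  then show ?thesis using vector_derivative_unique_at d by blast
qed

lemma finite_family_convergent_subseq:
  fixes f :: "nat \<Rightarrow> 'i \<Rightarrow> 'a::{heine_borel,real_normed_vector}"
  assumes "finite I" and "\<And>n i. i \<in> I \<Longrightarrow> norm (f n i) \<le> B"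
  shows "\<exists>r. strict_mono r \<and> (\<forall>i\<in>I. \<exists>y. (\<lambda>k. f (r k) i) \<longlonglongrightarrow> y)"
  using assms
proof (induction I rule: finite_induct)
  case empty
  show ?case by (rule exI[of _ id]) (simp add: strict_mono_def)
next
  case (insert i I)
  obtain r where r: "strict_mono r" "\<forall>j\<in>I. \<exists>y. (\<lambda>k. f (r k) j) \<longlonglongrightarrow> y"
    using insert by auto
  have "bounded (range (\<lambda>k. f (r k) i))"
    unfolding bounded_iff using insert.prems by auto
  then obtain y r' where r': "strict_mono r'" "((\<lambda>k. f (r k) i) \<circ> r') \<longlonglongrightarrow> y"
    using bounded_imp_convergent_subsequence by blast
  have "\<exists>y. (\<lambda>k. f (r (r' k)) j) \<longlonglongrightarrow> y" if j: "j \<in> insert i I" for j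
  proof (cases "j = i")
    case False
    then obtain z where "(\<lambda>k. f (r k) j) \<longlonglongrightarrow> z" using j r(2) by auto
    from LIMSEQ_subseq_LIMSEQ[OF this r'(1)] show ?thesis by (auto simp: comp_def)
  qed (use r'(2) in \<open>auto simp: comp_def\<close>)
  then show ?case using strict_mono_o[OF r(1) r'(1)] by (auto simp: comp_def)
qed

definition matrix_unit :: "site \<Rightarrow> site \<Rightarrow> cmat" where
  "matrix_unit \<kappa> \<rho> = (\<lambda>\<mu> \<nu>. if \<mu> = \<kappa> \<and> \<nu> = \<rho> then 1 else 0)"

lemma integral_derivative_halfline:
  fixes g :: "real \<Rightarrow> 'a::euclidean_space"
  assumes deriv: "\<And>t. t \<ge> 0 \<Longrightarrow> (g has_vector_derivative g' t) (at t within {0..})"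
    and int: "g' absolutely_integrable_on {0..}"
    and lim: "(g \<longlongrightarrow> L) at_top"
  shows "integral {0..} g' = L - g 0"
proof -
  define f where "f k t = (if t \<in> {..real k} then g' t else 0)" for k :: nat and t
  have "(g' has_integral (g (real k) - g 0)) {0..real k}" for k :: nat
    by (rule fundamental_theorem_of_calculus)
       (auto intro: has_vector_derivative_within_subset[OF deriv])
  moreover have "{..real k} \<inter> {0..} = {0..real k}" for k :: nat by auto
  ultimately have f: "(f k has_integral (g (real k) - g 0)) {0..}" for k :: nat
    unfolding f_def using has_integral_restrict_Int[of "{..real k}" g' _ "{0..}"] by simp
  have "(\<lambda>k. integral {0..} (f k)) \<longlonglongrightarrow> integral {0..} g'"
  proof (rule dominated_convergence(2))
    show "f k integrable_on {0..}" for k using f by blast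
    show "(\<lambda>t. norm (g' t)) integrable_on {0..}"
      using int by (simp add: absolutely_integrable_on_def)
    show "norm (f k t) \<le> norm (g' t)" for k t unfolding f_def by simp
    show "(\<lambda>k. f k t) \<longlonglongrightarrow> g' t" for t
    proof (rule tendsto_eventually)
      have "\<forall>\<^sub>F k in sequentially. t \<le> real k"
        using filterlim_real_sequentially by (simp add: filterlim_at_top)
      then show "\<forall>\<^sub>F k in sequentially. f k t = g' t"
        by eventually_elim (simp add: f_def)
    qed
  qed
  moreover have "(\<lambda>k. integral {0..} (f k)) \<longlonglongrightarrow> L - g 0"
    unfolding integral_unique[OF f]
    by (intro tendsto_diff filterlim_compose[OF lim filterlim_real_sequentially] tendsto_const)
  ultimately show ?thesis using LIMSEQ_unique by blast
qed

definition adj :: "cmat \<Rightarrow> cmat" where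
  "adj a = (\<lambda>\<mu> \<nu>. cnj (a \<nu> \<mu>))"

lemma supported_adj: "supported N a \<Longrightarrow> supported N (adj a)"
  unfolding supported_def adj_def by auto

lemma lind_adj:
  assumes a: "supported N a"
  shows "lind N v zl zr \<beta> (adj a) = adj (lind N v zl zr \<beta> a)"
proof (intro ext)
  fix \<mu> \<nu>
  have "mmul N (ham N v) (adj a) \<mu> \<nu> = cnj (mmul N a (ham N v) \<nu> \<mu>)"
    "mmul N (adj a) (ham N v) \<mu> \<nu> = cnj (mmul N (ham N v) a \<nu> \<mu>)"
    unfolding mmul_def adj_def by (simp_all add: cnj_ham ham_commute mult.commute)
  then show "lind N v zl zr \<beta> (adj a) \<mu> \<nu> = adj (lind N v zl zr \<beta> a) \<mu> \<nu>"
    unfolding lind_apply[OF supported_adj[OF a]]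
    by (simp add: adj_def lind_apply[OF a] damping_commute[of N zl zr \<beta> \<nu> \<mu>] algebra_simps)
qed

lemma supported_P1: "supported N (P1 N)"
  unfolding supported_def P1_apply using slice_subset_lattice by auto

lemma supported_PN: "supported N (PN N)"
  unfolding supported_def PN_apply using slice_subset_lattice by auto

definition source :: "nat list \<Rightarrow> real \<Rightarrow> real \<Rightarrow> cmat" where
  "source N ail air = (\<lambda>\<mu> \<nu>. 2 * complex_of_real ail * P1 N \<mu> \<nu> + 2 * complex_of_real air * PN N \<mu> \<nu>)"

lemma supported_source: "supported N (source N ail air)"
  using supported_P1 supported_PN unfolding supported_def source_def by auto

lemma tr_mmul_P1: "tr N (mmul N (P1 N) X) = (\<Sum>\<nu>\<in>slice N 1. X \<nu> \<nu>)"
proof -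
  have "tr N (mmul N (P1 N) X) = (\<Sum>\<nu>\<in>lattice N. if \<nu> \<in> slice N 1 then X \<nu> \<nu> else 0)"
    unfolding tr_def P1_def by (simp add: mmul_projS_left slice_subset_lattice finite_slice)
  also have "\<dots> = (\<Sum>\<nu>\<in>slice N 1. X \<nu> \<nu>)"
    using sum.inter_restrict[OF finite_lattice, of "\<lambda>\<nu>. X \<nu> \<nu>" N "slice N 1"]
      slice_subset_lattice[of N 1] by (simp add: Int_absorb1)
  finally show ?thesis .
qed

locale lindblad =
  fixes N :: "nat list" and v :: "site \<Rightarrow> real" and zl zr \<beta> :: real
begin

abbreviation "L \<equiv> lattice N"
abbreviation "l \<equiv> lind N v zl zr \<beta>"
abbreviation "K \<equiv> lind_coeff N v zl zr \<beta>"
abbreviation "E \<equiv> expl N v zl zr \<beta>"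

definition l1_norm :: "cmat \<Rightarrow> real" where
  "l1_norm a = (\<Sum>\<mu>\<in>L. \<Sum>\<nu>\<in>L. cmod (a \<mu> \<nu>))"

definition lind_bound :: real where
  "lind_bound = (\<Sum>\<mu>\<in>L. \<Sum>\<nu>\<in>L. \<Sum>\<kappa>\<in>L. \<Sum>\<rho>\<in>L. cmod (K \<mu> \<nu> \<kappa> \<rho>))"

lemma lind_bound_nonneg: "lind_bound \<ge> 0" unfolding lind_bound_def by (intro sum_nonneg) auto
lemma l1_norm_nonneg: "l1_norm a \<ge> 0" unfolding l1_norm_def by (intro sum_nonneg) auto

lemma norm_entry_le_l1_norm: "\<mu> \<in> L \<Longrightarrow> \<nu> \<in> L \<Longrightarrow> cmod (a \<mu> \<nu>) \<le> l1_norm a"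
proof -
  assume m: "\<mu> \<in> L" "\<nu> \<in> L"
  have "cmod (a \<mu> \<nu>) \<le> (\<Sum>\<nu>\<in>L. cmod (a \<mu> \<nu>))"
    by (rule member_le_sum) (use m finite_lattice in auto)
  also have "\<dots> \<le> l1_norm a" unfolding l1_norm_def
    by (rule member_le_sum[where f="\<lambda>\<mu>. \<Sum>\<nu>\<in>L. cmod (a \<mu> \<nu>)"]) (use m finite_lattice in \<open>auto intro: sum_nonneg\<close>)
  finally show ?thesis .
qed

lemma supported_funpow_lind: "supported N a \<Longrightarrow> supported N ((l ^^ k) a)"
  by (induction k) (auto simp: supported_lind)

lemma lind_sum:
  assumes S: "finite S" and f: "\<And>s. s \<in> S \<Longrightarrow> supported N (f s)"
  shows "l (\<lambda>\<mu> \<nu>. \<Sum>s\<in>S. c s * f s \<mu> \<nu>) = (\<lambda>\<mu> \<nu>. \<Sum>s\<in>S. c s * l (f s) \<mu> \<nu>)"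
proof (intro ext)
  fix \<mu> \<nu>
  have sp: "supported N (\<lambda>\<mu> \<nu>. \<Sum>s\<in>S. c s * f s \<mu> \<nu>)"
    using f unfolding supported_def by auto
  show "l (\<lambda>\<mu> \<nu>. \<Sum>s\<in>S. c s * f s \<mu> \<nu>) \<mu> \<nu> = (\<Sum>s\<in>S. c s * l (f s) \<mu> \<nu>)"
  proof (cases "\<mu> \<in> L \<and> \<nu> \<in> L")
    case True
    have "l (\<lambda>\<mu> \<nu>. \<Sum>s\<in>S. c s * f s \<mu> \<nu>) \<mu> \<nu>
        = (\<Sum>\<kappa>\<in>L. \<Sum>\<rho>\<in>L. K \<mu> \<nu> \<kappa> \<rho> * (\<Sum>s\<in>S. c s * f s \<kappa> \<rho>))"
      using True by (simp add: lind_eq_coeff_sum[OF sp])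
    also have "\<dots> = (\<Sum>s\<in>S. c s * (\<Sum>\<kappa>\<in>L. \<Sum>\<rho>\<in>L. K \<mu> \<nu> \<kappa> \<rho> * f s \<kappa> \<rho>))"
      by (simp add: sum_distrib_left sum_distrib_right mult_ac sum.swap[of _ S])
    also have "\<dots> = (\<Sum>s\<in>S. c s * l (f s) \<mu> \<nu>)"
      using True f by (intro sum.cong refl) (simp add: lind_eq_coeff_sum)
    finally show ?thesis .
  next
    case False
    then show ?thesis using sp f by (simp add: lind_outside)
  qed
qed

lemma funpow_lind_sum:
  assumes S: "finite S" and f: "\<And>s. s \<in> S \<Longrightarrow> supported N (f s)"
  shows "(l ^^ k) (\<lambda>\<mu> \<nu>. \<Sum>s\<in>S. c s * f s \<mu> \<nu>) = (\<lambda>\<mu> \<nu>. \<Sum>s\<in>S. c s * (l ^^ k) (f s) \<mu> \<nu>)"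
proof (induction k)
  case 0 show ?case by simp
next
  case (Suc k)
  show ?case using lind_sum[OF S, of "\<lambda>s. (l ^^ k) (f s)" c] f supported_funpow_lind Suc by simp
qed

lemma lind_lincomb2:
  assumes a: "supported N a" and b: "supported N b"
  shows "l (\<lambda>\<mu> \<nu>. x * a \<mu> \<nu> + y * b \<mu> \<nu>) = (\<lambda>\<mu> \<nu>. x * l a \<mu> \<nu> + y * l b \<mu> \<nu>)"
  using lind_sum[of "{True, False}" "\<lambda>s. if s then a else b" "\<lambda>s. if s then x else y"] a b by simp

lemma lind_diff:
  assumes a: "supported N a" and b: "supported N b"
  shows "l (\<lambda>\<mu> \<nu>. a \<mu> \<nu> - b \<mu> \<nu>) = (\<lambda>\<mu> \<nu>. l a \<mu> \<nu> - l b \<mu> \<nu>)"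
  using lind_lincomb2[OF a b, of 1 "-1"] by simp

lemma lind_uminus: "supported N a \<Longrightarrow> l (\<lambda>\<mu> \<nu>. - a \<mu> \<nu>) = (\<lambda>\<mu> \<nu>. - l a \<mu> \<nu>)"
  using lind_sum[of "{()}" "\<lambda>_. a" "\<lambda>_. -1"] by simp

lemma l1_norm_lind_le: "supported N a \<Longrightarrow> l1_norm (l a) \<le> lind_bound * l1_norm a"
proof -
  assume a: "supported N a"
  have "cmod (l a \<mu> \<nu>) \<le> (\<Sum>\<kappa>\<in>L. \<Sum>\<rho>\<in>L. cmod (K \<mu> \<nu> \<kappa> \<rho>)) * l1_norm a"
    if m: "\<mu> \<in> L" "\<nu> \<in> L" for \<mu> \<nu>
  proof -
    have "cmod (l a \<mu> \<nu>) \<le> (\<Sum>\<kappa>\<in>L. \<Sum>\<rho>\<in>L. cmod (K \<mu> \<nu> \<kappa> \<rho> * a \<kappa> \<rho>))"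
      unfolding lind_eq_coeff_sum[OF a m]
      by (rule order.trans[OF norm_sum]) (intro sum_mono norm_sum)
    also have "\<dots> \<le> (\<Sum>\<kappa>\<in>L. \<Sum>\<rho>\<in>L. cmod (K \<mu> \<nu> \<kappa> \<rho>) * l1_norm a)"
      by (intro sum_mono) (auto simp: norm_mult intro: mult_left_mono norm_entry_le_l1_norm)
    finally show ?thesis by (simp add: sum_distrib_right)
  qed
  then have "l1_norm (l a) \<le> (\<Sum>\<mu>\<in>L. \<Sum>\<nu>\<in>L. (\<Sum>\<kappa>\<in>L. \<Sum>\<rho>\<in>L. cmod (K \<mu> \<nu> \<kappa> \<rho>)) * l1_norm a)"
    unfolding l1_norm_def by (intro sum_mono) auto
  then show ?thesis by (simp add: lind_bound_def sum_distrib_right)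
qed

lemma l1_norm_funpow_lind_le: "supported N a \<Longrightarrow> l1_norm ((l ^^ k) a) \<le> lind_bound ^ k * l1_norm a"
proof (induction k)
  case 0 then show ?case by simp
next
  case (Suc k)
  have "l1_norm ((l ^^ Suc k) a) \<le> lind_bound * l1_norm ((l ^^ k) a)"
    using l1_norm_lind_le[OF supported_funpow_lind[OF Suc.prems]] by simp
  also have "\<dots> \<le> lind_bound * (lind_bound ^ k * l1_norm a)"
    using Suc lind_bound_nonneg by (intro mult_left_mono) auto
  finally show ?case by simp
qed

lemma norm_funpow_lind_entry_le:
  assumes a: "supported N a"
  shows "cmod ((l ^^ k) a \<mu> \<nu>) \<le> lind_bound ^ k * l1_norm a"
proof (cases "\<mu> \<in> L \<and> \<nu> \<in> L")
  case True
  then show ?thesis using norm_entry_le_l1_norm l1_norm_funpow_lind_le[OF a] order.trans by blast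
next
  case False
  then show ?thesis
    using supported_outside[OF supported_funpow_lind[OF a]] lind_bound_nonneg l1_norm_nonneg by simp
qed

definition exp_coeff :: "cmat \<Rightarrow> site \<Rightarrow> site \<Rightarrow> nat \<Rightarrow> complex" where
  "exp_coeff a \<mu> \<nu> k = (l ^^ k) a \<mu> \<nu> / of_nat (fact k)"

lemma summable_exp_coeff_powser: "supported N a \<Longrightarrow> summable (\<lambda>k. exp_coeff a \<mu> \<nu> k * z ^ k)"
proof -
  assume a: "supported N a"
  have "summable (\<lambda>k. l1_norm a * (inverse (fact k) * (lind_bound * cmod z) ^ k))"
    by (intro summable_mult summable_exp)
  then show ?thesis
  proof (rule summable_comparison_test')
    fix k :: nat
    have "norm (exp_coeff a \<mu> \<nu> k * z ^ k) = cmod ((l ^^ k) a \<mu> \<nu>) / fact k * cmod z ^ k"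
      unfolding exp_coeff_def by (simp add: norm_mult norm_divide norm_power)
    also have "\<dots> \<le> lind_bound ^ k * l1_norm a / fact k * cmod z ^ k"
      by (intro mult_right_mono divide_right_mono norm_funpow_lind_entry_le a) auto
    also have "\<dots> = l1_norm a * (inverse (fact k) * (lind_bound * cmod z) ^ k)"
      by (simp add: field_simps power_mult_distrib)
    finally show "norm (exp_coeff a \<mu> \<nu> k * z ^ k) \<le> l1_norm a * (inverse (fact k) * (lind_bound * cmod z) ^ k)" .
  qed
qed

lemma expl_eq_powser: "E t a \<mu> \<nu> = (\<Sum>k. exp_coeff a \<mu> \<nu> k * (complex_of_real t) ^ k)"
  unfolding expl_def exp_coeff_def by (simp add: of_real_divide of_real_power field_simps)

lemma summable_expl_terms: "supported N a \<Longrightarrow> summable (\<lambda>k. complex_of_real (t ^ k / fact k) * ((l ^^ k) a \<mu> \<nu>))"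
  using summable_exp_coeff_powser[of a \<mu> \<nu> "complex_of_real t"] unfolding exp_coeff_def
  by (simp add: of_real_divide of_real_power field_simps)

lemma supported_expl: "supported N a \<Longrightarrow> supported N (E t a)"
  unfolding supported_def expl_def using supported_funpow_lind[unfolded supported_def] by simp

lemma expl_outside: "supported N a \<Longrightarrow> \<mu> \<notin> L \<or> \<nu> \<notin> L \<Longrightarrow> E t a \<mu> \<nu> = 0"
  using supported_expl supported_outside by blast

lemma expl_0: "E 0 a = a"
proof (intro ext)
  fix \<mu> \<nu>
  have "E 0 a \<mu> \<nu> = (\<Sum>k. exp_coeff a \<mu> \<nu> k * 0 ^ k)" unfolding expl_eq_powser by simp
  also have "\<dots> = a \<mu> \<nu>" by (subst powser_zero) (simp add: exp_coeff_def)
  finally show "E 0 a \<mu> \<nu> = a \<mu> \<nu>" .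
qed

lemma expl_sum:
  assumes S: "finite S" and f: "\<And>s. s \<in> S \<Longrightarrow> supported N (f s)"
  shows "E t (\<lambda>\<mu> \<nu>. \<Sum>s\<in>S. c s * f s \<mu> \<nu>) = (\<lambda>\<mu> \<nu>. \<Sum>s\<in>S. c s * E t (f s) \<mu> \<nu>)"
proof (intro ext)
  fix \<mu> \<nu>
  have "E t (\<lambda>\<mu> \<nu>. \<Sum>s\<in>S. c s * f s \<mu> \<nu>) \<mu> \<nu>
     = (\<Sum>k. \<Sum>s\<in>S. c s * (complex_of_real (t ^ k / fact k) * (l ^^ k) (f s) \<mu> \<nu>))"
  proof -
    have "(l ^^ k) (\<lambda>\<mu> \<nu>. \<Sum>s\<in>S. c s * f s \<mu> \<nu>) \<mu> \<nu> = (\<Sum>s\<in>S. c s * (l ^^ k) (f s) \<mu> \<nu>)" for k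
      using funpow_lind_sum[OF S f, where k=k and c=c] by simp
    then show ?thesis unfolding expl_def by (simp add: sum_distrib_left mult_ac)
  qed
  also have "\<dots> = (\<Sum>s\<in>S. \<Sum>k. c s * (complex_of_real (t ^ k / fact k) * (l ^^ k) (f s) \<mu> \<nu>))"
    by (rule suminf_sum) (intro summable_mult summable_expl_terms f)
  also have "\<dots> = (\<Sum>s\<in>S. c s * E t (f s) \<mu> \<nu>)"
    unfolding expl_def by (intro sum.cong refl suminf_mult summable_expl_terms f)
  finally show "E t (\<lambda>\<mu> \<nu>. \<Sum>s\<in>S. c s * f s \<mu> \<nu>) \<mu> \<nu> = (\<Sum>s\<in>S. c s * E t (f s) \<mu> \<nu>)" .
qed

lemma expl_lind_commute: "supported N a \<Longrightarrow> E t (l a) = l (E t a)"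
proof (intro ext)
  fix \<mu> \<nu>
  assume a: "supported N a"
  show "E t (l a) \<mu> \<nu> = l (E t a) \<mu> \<nu>"
  proof (cases "\<mu> \<in> L \<and> \<nu> \<in> L")
    case True
    have "l (E t a) \<mu> \<nu> = (\<Sum>\<kappa>\<in>L. \<Sum>\<rho>\<in>L. K \<mu> \<nu> \<kappa> \<rho> * E t a \<kappa> \<rho>)"
      using True by (simp add: lind_eq_coeff_sum supported_expl a)
    also have "\<dots> = (\<Sum>\<kappa>\<in>L. \<Sum>\<rho>\<in>L. \<Sum>k. K \<mu> \<nu> \<kappa> \<rho> * (complex_of_real (t ^ k / fact k) * (l ^^ k) a \<kappa> \<rho>))"
      unfolding expl_def by (intro sum.cong refl suminf_mult[symmetric] summable_expl_terms a)
    also have "\<dots> = (\<Sum>\<kappa>\<in>L. \<Sum>k. \<Sum>\<rho>\<in>L. K \<mu> \<nu> \<kappa> \<rho> * (complex_of_real (t ^ k / fact k) * (l ^^ k) a \<kappa> \<rho>))"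
      by (intro sum.cong refl suminf_sum[symmetric] summable_mult summable_expl_terms a)
    also have "\<dots> = (\<Sum>k. \<Sum>\<kappa>\<in>L. \<Sum>\<rho>\<in>L. K \<mu> \<nu> \<kappa> \<rho> * (complex_of_real (t ^ k / fact k) * (l ^^ k) a \<kappa> \<rho>))"
      by (intro suminf_sum[symmetric] summable_sum summable_mult summable_expl_terms a)
    also have "\<dots> = (\<Sum>k. complex_of_real (t ^ k / fact k) * (l ^^ k) (l a) \<mu> \<nu>)"
    proof (intro suminf_cong)
      fix k
      have "(l ^^ k) (l a) \<mu> \<nu> = l ((l ^^ k) a) \<mu> \<nu>"
        by (simp add: funpow_swap1)
      also have "\<dots> = (\<Sum>\<kappa>\<in>L. \<Sum>\<rho>\<in>L. K \<mu> \<nu> \<kappa> \<rho> * (l ^^ k) a \<kappa> \<rho>)"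
        using True by (simp add: lind_eq_coeff_sum supported_funpow_lind a)
      finally show "(\<Sum>\<kappa>\<in>L. \<Sum>\<rho>\<in>L. K \<mu> \<nu> \<kappa> \<rho> * (complex_of_real (t ^ k / fact k) * (l ^^ k) a \<kappa> \<rho>))
          = complex_of_real (t ^ k / fact k) * (l ^^ k) (l a) \<mu> \<nu>"
        by (simp add: sum_distrib_left mult_ac)
    qed
    also have "\<dots> = E t (l a) \<mu> \<nu>" unfolding expl_def ..
    finally show ?thesis by simp
  next
    case False
    then show ?thesis using a by (simp add: lind_outside supported_expl expl_outside supported_lind)
  qed
qed

lemma expl_has_vector_derivative:
  assumes a: "supported N a"
  shows "((\<lambda>t. E t a \<mu> \<nu>) has_vector_derivative l (E t a) \<mu> \<nu>) (at t within S)"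
proof -
  have d: "((\<lambda>z. \<Sum>k. exp_coeff a \<mu> \<nu> k * z ^ k) has_field_derivative (\<Sum>k. diffs (exp_coeff a \<mu> \<nu>) k * z ^ k)) (at z)" for z
    by (rule termdiffs_strong_converges_everywhere) (rule summable_exp_coeff_powser[OF a])
  have "diffs (exp_coeff a \<mu> \<nu>) = exp_coeff (l a) \<mu> \<nu>"
  proof
    fix k
    have "of_nat (Suc k) * (Y / fact (Suc k)) = Y / (fact k :: complex)" for Y
      unfolding fact_Suc by (simp add: field_simps del: of_nat_Suc)
    then show "diffs (exp_coeff a \<mu> \<nu>) k = exp_coeff (l a) \<mu> \<nu> k"
      unfolding diffs_def exp_coeff_def funpow_Suc_right comp_def of_nat_fact by simp
  qed
  then have "((\<lambda>t. E t a \<mu> \<nu>) has_vector_derivative E t (l a) \<mu> \<nu>) (at t within S)"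
    unfolding expl_eq_powser using d[of "complex_of_real t"]
    by (auto intro: has_vector_derivative_real_field)
  then show ?thesis using expl_lind_commute[OF a] by simp
qed

definition hs_sq :: "cmat \<Rightarrow> real" where
  "hs_sq a = (\<Sum>\<mu>\<in>L. \<Sum>\<nu>\<in>L. (cmod (a \<mu> \<nu>))\<^sup>2)"

lemma hs_sq_nonneg: "hs_sq a \<ge> 0"
  unfolding hs_sq_def by (intro sum_nonneg) auto

lemma norm_entry_sq_le_hs_sq: "\<mu> \<in> L \<Longrightarrow> \<nu> \<in> L \<Longrightarrow> (cmod (a \<mu> \<nu>))\<^sup>2 \<le> hs_sq a"
proof -
  assume m: "\<mu> \<in> L" "\<nu> \<in> L"
  have "(cmod (a \<mu> \<nu>))\<^sup>2 \<le> (\<Sum>\<nu>\<in>L. (cmod (a \<mu> \<nu>))\<^sup>2)"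
    by (rule member_le_sum) (use m finite_lattice in auto)
  also have "\<dots> \<le> hs_sq a" unfolding hs_sq_def
    by (rule member_le_sum[where f="\<lambda>\<mu>. \<Sum>\<nu>\<in>L. (cmod (a \<mu> \<nu>))\<^sup>2"])
       (use m finite_lattice in \<open>auto intro: sum_nonneg\<close>)
  finally show ?thesis .
qed

lemma norm_entry_le_sqrt_hs_sq: "\<mu> \<in> L \<Longrightarrow> \<nu> \<in> L \<Longrightarrow> cmod (a \<mu> \<nu>) \<le> sqrt (hs_sq a)"
  using norm_entry_sq_le_hs_sq real_le_rsqrt by blast

lemma hs_sq_eq_0D: "supported N a \<Longrightarrow> hs_sq a = 0 \<Longrightarrow> a = (\<lambda>\<mu> \<nu>. 0)"
proof (intro ext)
  fix \<mu> \<nu> assume a: "supported N a" and e: "hs_sq a = 0"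
  show "a \<mu> \<nu> = 0"
  proof (cases "\<mu> \<in> L \<and> \<nu> \<in> L")
    case True
    then have "(cmod (a \<mu> \<nu>))\<^sup>2 \<le> 0" using norm_entry_sq_le_hs_sq[of \<mu> \<nu> a] e by simp
    then show ?thesis by simp
  qed (use a supported_outside in blast)
qed

lemma Re_inner_lind:
  assumes a: "supported N a"
  shows "Re (\<Sum>\<mu>\<in>L. \<Sum>\<nu>\<in>L. cnj (a \<mu> \<nu>) * l a \<mu> \<nu>)
       = - (\<Sum>\<mu>\<in>L. \<Sum>\<nu>\<in>L. damping N zl zr \<beta> \<mu> \<nu> * (cmod (a \<mu> \<nu>))\<^sup>2)"
proof -
  let ?h = "ham N v"
  define X where "X = (\<Sum>\<mu>\<in>L. \<Sum>\<nu>\<in>L. cnj (a \<mu> \<nu>) * mmul N ?h a \<mu> \<nu>)"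
  define Y where "Y = (\<Sum>\<mu>\<in>L. \<Sum>\<nu>\<in>L. cnj (a \<mu> \<nu>) * mmul N a ?h \<mu> \<nu>)"
  have "cnj X = X" "cnj Y = Y"
    unfolding X_def Y_def by (rule inner_ham_mmul_real inner_mmul_ham_real)+
  then have real: "Im X = 0" "Im Y = 0"
    by (simp_all add: complex_eq_iff)
  have "cnj (a \<mu> \<nu>) * l a \<mu> \<nu> = - \<i> * (cnj (a \<mu> \<nu>) * mmul N ?h a \<mu> \<nu>)
      + \<i> * (cnj (a \<mu> \<nu>) * mmul N a ?h \<mu> \<nu>)
      - complex_of_real (damping N zl zr \<beta> \<mu> \<nu> * (cmod (a \<mu> \<nu>))\<^sup>2)"
    if "\<mu> \<in> L" "\<nu> \<in> L" for \<mu> \<nu>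
  proof -
    have "cnj (a \<mu> \<nu>) * a \<mu> \<nu> = complex_of_real ((cmod (a \<mu> \<nu>))\<^sup>2)"
      using complex_norm_square[of "a \<mu> \<nu>"] by (simp only: mult.commute)
    then show ?thesis unfolding lind_apply[OF a] using that by (simp add: algebra_simps)
  qed
  then have "(\<Sum>\<mu>\<in>L. \<Sum>\<nu>\<in>L. cnj (a \<mu> \<nu>) * l a \<mu> \<nu>)
      = - \<i> * X + \<i> * Y - complex_of_real (\<Sum>\<mu>\<in>L. \<Sum>\<nu>\<in>L. damping N zl zr \<beta> \<mu> \<nu> * (cmod (a \<mu> \<nu>))\<^sup>2)"
    unfolding X_def Y_def by (simp add: sum.distrib sum_subtractf sum_distrib_left sum_negf)
  then show ?thesis using real by simp
qed

definition is_orbit :: "(real \<Rightarrow> cmat) \<Rightarrow> bool" where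
  "is_orbit x \<longleftrightarrow> (\<forall>t. supported N (x t)) \<and>
     (\<forall>t \<mu> \<nu>. ((\<lambda>s. x s \<mu> \<nu>) has_vector_derivative l (x t) \<mu> \<nu>) (at t))"

lemma is_orbit_expl: "supported N a \<Longrightarrow> is_orbit (\<lambda>t. E t a)"
  unfolding is_orbit_def by (auto simp: supported_expl expl_has_vector_derivative)

lemma is_orbit_shift:
  assumes x: "is_orbit x"
  shows "is_orbit (\<lambda>t. x (t + s))"
  unfolding is_orbit_def
proof (intro conjI allI)
  fix t \<mu> \<nu>
  have "(((\<lambda>s. x s \<mu> \<nu>) \<circ> (\<lambda>t. t + s)) has_vector_derivative (1 *\<^sub>R l (x (t + s)) \<mu> \<nu>)) (at t)"
    using x unfolding is_orbit_def by (intro vector_diff_chain_at) (auto intro!: derivative_eq_intros)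
  then show "((\<lambda>r. x (r + s) \<mu> \<nu>) has_vector_derivative l (x (t + s)) \<mu> \<nu>) (at t)"
    by (simp add: comp_def)
qed (use x in \<open>simp add: is_orbit_def\<close>)

lemma is_orbit_diff: "is_orbit x \<Longrightarrow> is_orbit y \<Longrightarrow> is_orbit (\<lambda>t \<mu> \<nu>. x t \<mu> \<nu> - y t \<mu> \<nu>)"
  unfolding is_orbit_def
  by (auto simp: lind_diff supported_def intro!: derivative_eq_intros)

lemma hs_sq_orbit_has_derivative:
  assumes x: "is_orbit x"
  shows "((\<lambda>t. hs_sq (x t)) has_real_derivative
     (2 * Re (\<Sum>\<mu>\<in>L. \<Sum>\<nu>\<in>L. cnj (x t \<mu> \<nu>) * l (x t) \<mu> \<nu>))) (at t)"
proof -
  have d: "((\<lambda>s. x s \<mu> \<nu>) has_vector_derivative l (x t) \<mu> \<nu>) (at t)" for \<mu> \<nu>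
    using x unfolding is_orbit_def by blast
  have "(\<lambda>t. hs_sq (x t)) = (\<lambda>t. \<Sum>\<mu>\<in>L. \<Sum>\<nu>\<in>L. (Re (x t \<mu> \<nu>))\<^sup>2 + (Im (x t \<mu> \<nu>))\<^sup>2)"
    unfolding hs_sq_def cmod_power2 ..
  moreover have "((\<lambda>t. \<Sum>\<mu>\<in>L. \<Sum>\<nu>\<in>L. (Re (x t \<mu> \<nu>))\<^sup>2 + (Im (x t \<mu> \<nu>))\<^sup>2) has_real_derivative
     (\<Sum>\<mu>\<in>L. \<Sum>\<nu>\<in>L. 2 * Re (x t \<mu> \<nu>) * Re (l (x t) \<mu> \<nu>) + 2 * Im (x t \<mu> \<nu>) * Im (l (x t) \<mu> \<nu>))) (at t)"
    by (intro DERIV_sum derivative_eq_intros has_field_derivative_Re has_field_derivative_Im d) (auto intro: d)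
  moreover have "(\<Sum>\<mu>\<in>L. \<Sum>\<nu>\<in>L. 2 * Re (x t \<mu> \<nu>) * Re (l (x t) \<mu> \<nu>) + 2 * Im (x t \<mu> \<nu>) * Im (l (x t) \<mu> \<nu>))
     = 2 * Re (\<Sum>\<mu>\<in>L. \<Sum>\<nu>\<in>L. cnj (x t \<mu> \<nu>) * l (x t) \<mu> \<nu>)"
    by (simp add: Re_sum sum_distrib_left algebra_simps)
  ultimately show ?thesis by simp
qed

end

locale driven_lattice = lindblad +
  assumes N_nonempty: "N \<noteq> []" and zl_pos: "zl > 0" and zr_nonneg: "zr \<ge> 0" and \<beta>_nonneg: "\<beta> \<ge> 0"
begin

lemma Re_inner_lind_nonpos: "supported N a \<Longrightarrow> Re (\<Sum>\<mu>\<in>L. \<Sum>\<nu>\<in>L. cnj (a \<mu> \<nu>) * l a \<mu> \<nu>) \<le> 0"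
  unfolding Re_inner_lind using damping_nonneg zl_pos zr_nonneg \<beta>_nonneg
  by (auto intro!: sum_nonneg)

lemma hs_sq_orbit_antimono:
  assumes x: "is_orbit x" and st: "s \<le> t"
  shows "hs_sq (x t) \<le> hs_sq (x s)"
proof -
  have "\<exists>y. ((\<lambda>t. hs_sq (x t)) has_real_derivative y) (at r) \<and> y \<le> 0" for r
    using hs_sq_orbit_has_derivative[OF x, of r] Re_inner_lind_nonpos[of "x r"] x
    unfolding is_orbit_def by auto
  then show ?thesis using DERIV_nonpos_imp_nonincreasing[OF st, of "\<lambda>t. hs_sq (x t)"] by blast
qed

lemma orbit_unique:
  assumes x: "is_orbit x" and y: "is_orbit y" and e: "x t0 = y t0" and t: "t0 \<le> t"
  shows "x t = y t"
proof -
  let ?d = "\<lambda>t \<mu> \<nu>. x t \<mu> \<nu> - y t \<mu> \<nu>"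
  have d: "is_orbit ?d" by (rule is_orbit_diff[OF x y])
  have "hs_sq (?d t) \<le> hs_sq (?d t0)" by (rule hs_sq_orbit_antimono[OF d t])
  also have "hs_sq (?d t0) = 0" using e by (simp add: hs_sq_def)
  finally have "hs_sq (?d t) = 0" using hs_sq_nonneg[of "?d t"] by linarith
  then have "?d t = (\<lambda>\<mu> \<nu>. 0)" using d unfolding is_orbit_def by (intro hs_sq_eq_0D) auto
  then show ?thesis by (intro ext) (metis eq_iff_diff_eq_0)
qed

lemma expl_add: "supported N a \<Longrightarrow> 0 \<le> t \<Longrightarrow> E (t + s) a = E t (E s a)"
  using orbit_unique[OF is_orbit_shift[OF is_orbit_expl, of a s] is_orbit_expl[OF supported_expl, of a s], of 0 t]
  by (simp add: expl_0)

lemma expl_fixed_point: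
  assumes a: "supported N a" and z: "l a = (\<lambda>\<mu> \<nu>. 0)" and t: "0 \<le> t"
  shows "E t a = a"
proof -
  have "is_orbit (\<lambda>t. a)" unfolding is_orbit_def using a z by simp
  from orbit_unique[OF is_orbit_expl[OF a] this, of 0 t] t show ?thesis by (simp add: expl_0)
qed

lemma vanishes_on_slice1_of_no_dissipation:
  assumes a: "supported N a" and diss: "Re (\<Sum>\<mu>\<in>L. \<Sum>\<nu>\<in>L. cnj (a \<mu> \<nu>) * l a \<mu> \<nu>) = 0"
    and \<mu>: "\<mu> \<in> slice N 1"
  shows "a \<mu> \<nu> = 0"
proof (cases "\<nu> \<in> L")
  case True
  have nonneg: "damping N zl zr \<beta> \<mu>' \<nu>' * (cmod (a \<mu>' \<nu>'))\<^sup>2 \<ge> 0" for \<mu>' \<nu>'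
    using damping_nonneg[OF less_imp_le[OF zl_pos] zr_nonneg \<beta>_nonneg] by simp
  have "(\<Sum>\<mu>\<in>L. \<Sum>\<nu>\<in>L. damping N zl zr \<beta> \<mu> \<nu> * (cmod (a \<mu> \<nu>))\<^sup>2) = 0"
    using diss unfolding Re_inner_lind[OF a] by simp
  then have "damping N zl zr \<beta> \<mu> \<nu> * (cmod (a \<mu> \<nu>))\<^sup>2 = 0"
    using \<mu> True slice_subset_lattice finite_lattice nonneg
    by (subst (asm) sum_nonneg_eq_0_iff) (auto intro: sum_nonneg simp: sum_nonneg_eq_0_iff)
  moreover have "damping N zl zr \<beta> \<mu> \<nu> \<ge> zl"
    using \<mu> zl_pos zr_nonneg \<beta>_nonneg unfolding damping_def by simp
  ultimately show ?thesis using zl_pos by auto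
next
  case False
  then show ?thesis using a supported_outside by blast
qed

lemma orbit_next_layer_vanishes:
  assumes y: "supported N y" and \<mu>: "\<mu> \<in> L" "\<mu>!0 < N!0"
    and below: "\<And>r \<kappa> \<nu>. r > 0 \<Longrightarrow> \<kappa> \<in> L \<Longrightarrow> \<kappa>!0 \<le> \<mu>!0 \<Longrightarrow> E r y \<kappa> \<nu> = 0"
    and s: "s > 0"
  shows "E s y (splus \<mu>) \<nu> = 0"
proof -
  have "l (E s y) \<mu> \<nu> = 0"
    using below \<mu>(1) by (intro has_vector_derivative_zero_of_constant[OF expl_has_vector_derivative[OF y] s]) auto
  moreover have "l (E s y) \<mu> \<nu> = \<i> * E s y (splus \<mu>) \<nu>"
    using below s by (intro lind_row_shift N_nonempty supported_expl y \<mu>)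
  ultimately show ?thesis by simp
qed

lemma orbit_vanishes_of_vanishes_on_slice1:
  assumes y: "supported N y"
    and slice1: "\<And>s \<mu> \<nu>. s > 0 \<Longrightarrow> \<mu> \<in> slice N 1 \<Longrightarrow> E s y \<mu> \<nu> = 0"
    and s: "s > 0"
  shows "E s y \<mu> \<nu> = 0"
proof -
  have rows: "\<forall>s>0. \<forall>\<mu>\<in>L. \<mu>!0 \<le> j \<longrightarrow> (\<forall>\<nu>. E s y \<mu> \<nu> = 0)" for j
  proof (induction j)
    case 0
    then show ?case using lattice_first_coord_bounds[OF N_nonempty] by fastforce
  next
    case (Suc j)
    show ?case
    proof (intro allI impI ballI)
      fix s :: real and \<mu> \<nu> assume s: "s > 0" and \<mu>: "\<mu> \<in> L" and le: "\<mu>!0 \<le> Suc j"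
      consider "\<mu>!0 \<le> j" | "\<mu>!0 = Suc j" "j = 0" | "\<mu>!0 = Suc j" "j \<ge> 1"
        using le by linarith
      then show "E s y \<mu> \<nu> = 0"
      proof cases
        case 1
        then show ?thesis using Suc.IH s \<mu> by blast
      next
        case 2
        then show ?thesis using slice1[OF s] \<mu> unfolding slice_def by simp
      next
        case 3
        define \<mu>' where "\<mu>' = \<mu>[0 := j]"
        have \<mu>': "\<mu>' \<in> L" "splus \<mu>' = \<mu>" "\<mu>'!0 = j"
          using lower_neighbour[OF N_nonempty \<mu> 3] unfolding \<mu>'_def by auto
        have "\<mu>'!0 < N!0"
          using \<mu>' lattice_first_coord_bounds[OF N_nonempty \<mu>] 3 by simp
        from orbit_next_layer_vanishes[OF y \<mu>'(1) this _ s] Suc.IH \<mu>'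
        show ?thesis by auto
      qed
    qed
  qed
  show ?thesis
  proof (cases "\<mu> \<in> L")
    case True
    then show ?thesis using rows[of "N!0"] s lattice_first_coord_bounds[OF N_nonempty True] by blast
  qed (use y in \<open>simp add: expl_outside\<close>)
qed

lemma eq_0_of_constant_hs_sq_orbit:
  assumes y: "supported N y" and c: "\<And>s. s \<ge> 0 \<Longrightarrow> hs_sq (E s y) = c"
  shows "y = (\<lambda>\<mu> \<nu>. 0)"
proof -
  have slice1: "E s y \<mu> \<nu> = 0" if s: "s > 0" and \<mu>: "\<mu> \<in> slice N 1" for s \<mu> \<nu>
  proof (rule vanishes_on_slice1_of_no_dissipation[OF supported_expl[OF y] _ \<mu>])
    have "((\<lambda>t. hs_sq (E t y)) has_real_derivative 0) (at s)"
      by (rule has_field_derivative_transform_within_open[of "\<lambda>t. c" _ _ "{0<..}"]) (use s c in auto)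
    with hs_sq_orbit_has_derivative[OF is_orbit_expl[OF y], of s]
    have "2 * Re (\<Sum>\<mu>\<in>L. \<Sum>\<nu>\<in>L. cnj (E s y \<mu> \<nu>) * l (E s y) \<mu> \<nu>) = 0"
      by (rule DERIV_unique)
    then show "Re (\<Sum>\<mu>\<in>L. \<Sum>\<nu>\<in>L. cnj (E s y \<mu> \<nu>) * l (E s y) \<mu> \<nu>) = 0"
      by simp
  qed
  have vanish: "E s y \<mu> \<nu> = 0" if "s > 0" for s \<mu> \<nu>
    by (rule orbit_vanishes_of_vanishes_on_slice1[OF y slice1 that])
  show ?thesis
  proof (intro ext)
    fix \<mu> \<nu>
    have "((\<lambda>s. E s y \<mu> \<nu>) \<longlongrightarrow> E 0 y \<mu> \<nu>) (at_right 0)"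
      using has_vector_derivative_continuous[OF expl_has_vector_derivative[OF y]]
      by (simp add: continuous_within)
    moreover have "((\<lambda>s. E s y \<mu> \<nu>) \<longlongrightarrow> 0) (at_right 0)"
      by (rule tendsto_eventually, rule eventually_at_rightI[of 0 1]) (auto intro: vanish)
    ultimately have "E 0 y \<mu> \<nu> = 0" by (rule tendsto_unique[rotated]) simp
    then show "y \<mu> \<nu> = 0" by (simp add: expl_0)
  qed
qed

lemma supported_matrix_unit: "\<kappa> \<in> L \<Longrightarrow> \<rho> \<in> L \<Longrightarrow> supported N (matrix_unit \<kappa> \<rho>)"
  unfolding supported_def matrix_unit_def by auto

lemma expl_matrix_unit_expansion:
  assumes b: "supported N b"
  shows "E t b \<mu> \<nu> = (\<Sum>p\<in>L \<times> L. b (fst p) (snd p) * E t (matrix_unit (fst p) (snd p)) \<mu> \<nu>)"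
proof -
  have "b = (\<lambda>\<mu> \<nu>. \<Sum>p\<in>L \<times> L. b (fst p) (snd p) * matrix_unit (fst p) (snd p) \<mu> \<nu>)"
  proof (intro ext)
    fix \<mu> \<nu>
    have "(\<Sum>p\<in>L \<times> L. b (fst p) (snd p) * matrix_unit (fst p) (snd p) \<mu> \<nu>)
        = (\<Sum>p\<in>L \<times> L. if (\<mu>, \<nu>) = p then b \<mu> \<nu> else 0)"
      unfolding matrix_unit_def by (intro sum.cong refl) auto
    then show "b \<mu> \<nu> = (\<Sum>p\<in>L \<times> L. b (fst p) (snd p) * matrix_unit (fst p) (snd p) \<mu> \<nu>)"
      using b by (auto simp: finite_lattice supported_outside)
  qed
  then have "E t b = E t (\<lambda>\<mu> \<nu>. \<Sum>p\<in>L \<times> L. b (fst p) (snd p) * matrix_unit (fst p) (snd p) \<mu> \<nu>)"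
    by simp
  also have "\<dots> = (\<lambda>\<mu> \<nu>. \<Sum>p\<in>L \<times> L. b (fst p) (snd p) * E t (matrix_unit (fst p) (snd p)) \<mu> \<nu>)"
    by (rule expl_sum) (auto simp: finite_lattice supported_matrix_unit)
  finally show ?thesis by simp
qed

lemma tendsto_expl_seq:
  assumes "\<And>k. supported N (b k)" and "supported N y"
    and "\<And>\<mu> \<nu>. \<mu> \<in> L \<Longrightarrow> \<nu> \<in> L \<Longrightarrow> (\<lambda>k. b k \<mu> \<nu>) \<longlonglongrightarrow> y \<mu> \<nu>"
  shows "(\<lambda>k. E t (b k) \<mu> \<nu>) \<longlonglongrightarrow> E t y \<mu> \<nu>"
  unfolding expl_matrix_unit_expansion[OF assms(1)] expl_matrix_unit_expansion[OF assms(2)]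
  by (intro tendsto_sum tendsto_mult tendsto_const) (auto intro: assms(3))

lemma tendsto_hs_sq_seq:
  assumes "\<And>\<mu> \<nu>. \<mu> \<in> L \<Longrightarrow> \<nu> \<in> L \<Longrightarrow> (\<lambda>k. b k \<mu> \<nu>) \<longlonglongrightarrow> y \<mu> \<nu>"
  shows "(\<lambda>k. hs_sq (b k)) \<longlonglongrightarrow> hs_sq y"
  unfolding hs_sq_def by (intro tendsto_sum tendsto_power tendsto_norm) (auto intro: assms)

lemma orbit_convergent_subseq:
  assumes a: "supported N a"
  obtains r y where "strict_mono r" "supported N y"
    "\<And>\<mu> \<nu>. \<mu> \<in> L \<Longrightarrow> \<nu> \<in> L \<Longrightarrow> (\<lambda>k. E (real (r k)) a \<mu> \<nu>) \<longlonglongrightarrow> y \<mu> \<nu>"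
proof -
  have "cmod (E (real n) a \<mu> \<nu>) \<le> sqrt (hs_sq a)" if "(\<mu>, \<nu>) \<in> L \<times> L" for n \<mu> \<nu>
  proof -
    have "cmod (E (real n) a \<mu> \<nu>) \<le> sqrt (hs_sq (E (real n) a))"
      using that norm_entry_le_sqrt_hs_sq by auto
    also have "\<dots> \<le> sqrt (hs_sq a)"
      using hs_sq_orbit_antimono[OF is_orbit_expl[OF a], of 0 "real n"] by (simp add: expl_0)
    finally show ?thesis .
  qed
  then obtain r where r: "strict_mono r"
    and "\<forall>p\<in>L \<times> L. \<exists>y. (\<lambda>k. E (real (r k)) a (fst p) (snd p)) \<longlonglongrightarrow> y"
    using finite_family_convergent_subseq[of "L \<times> L" "\<lambda>n p. E (real n) a (fst p) (snd p)" "sqrt (hs_sq a)"]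
    by (auto simp: finite_lattice)
  then obtain Y where Y: "\<forall>p\<in>L \<times> L. (\<lambda>k. E (real (r k)) a (fst p) (snd p)) \<longlonglongrightarrow> Y p"
    by metis
  show ?thesis
  proof
    show "supported N (\<lambda>\<mu> \<nu>. if \<mu> \<in> L \<and> \<nu> \<in> L then Y (\<mu>, \<nu>) else 0)"
      unfolding supported_def by auto
  qed (use r Y in auto)
qed

lemma hs_sq_expl_tendsto_0:
  assumes a: "supported N a"
  shows "((\<lambda>t. hs_sq (E t a)) \<longlongrightarrow> 0) at_top"
proof -
  let ?h = "\<lambda>t. hs_sq (E t a)"
  have anti: "?h t \<le> ?h s" if "s \<le> t" for s t
    by (rule hs_sq_orbit_antimono[OF is_orbit_expl[OF a] that])
  obtain c where "(\<lambda>n. ?h (real n)) \<longlonglongrightarrow> c"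
    using decseq_convergent[of "\<lambda>n. ?h (real n)" 0] anti hs_sq_nonneg
    unfolding decseq_def by (metis of_nat_mono)
  then have "((\<lambda>t. - ?h t) \<longlongrightarrow> - c) at_top"
    using anti by (intro tendsto_at_topI_sequentially_real tendsto_minus) (auto simp: mono_def)
  then have hc: "(?h \<longlongrightarrow> c) at_top"
    using tendsto_minus by fastforce
  obtain r y where r: "strict_mono r" and y: "supported N y"
    and conv: "\<And>\<mu> \<nu>. \<mu> \<in> L \<Longrightarrow> \<nu> \<in> L \<Longrightarrow> (\<lambda>k. E (real (r k)) a \<mu> \<nu>) \<longlonglongrightarrow> y \<mu> \<nu>"
    using orbit_convergent_subseq[OF a] by blast
  have "hs_sq (E s y) = c" if s: "s \<ge> 0" for s
  proof -
    have "(\<lambda>k. hs_sq (E s (E (real (r k)) a))) \<longlonglongrightarrow> hs_sq (E s y)"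
      by (intro tendsto_hs_sq_seq tendsto_expl_seq supported_expl a y conv)
    moreover have "filterlim (\<lambda>k. s + real (r k)) at_top sequentially"
      by (intro filterlim_tendsto_add_at_top[OF tendsto_const] filterlim_compose[OF
            filterlim_real_sequentially filterlim_subseq[OF r]])
    from filterlim_compose[OF hc this]
    have "(\<lambda>k. hs_sq (E s (E (real (r k)) a))) \<longlonglongrightarrow> c"
      by (simp add: expl_add[OF a s])
    ultimately show ?thesis using LIMSEQ_unique by blast
  qed
  then have "y = (\<lambda>\<mu> \<nu>. 0)"
    by (rule eq_0_of_constant_hs_sq_orbit[OF y])
  moreover have "hs_sq (E 0 y) = c" using \<open>\<And>s. s \<ge> 0 \<Longrightarrow> hs_sq (E s y) = c\<close> by simp
  ultimately have "c = 0" by (simp add: expl_0 hs_sq_def)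
  then show ?thesis using hc by simp
qed

lemma expl_tendsto_0:
  assumes a: "supported N a"
  shows "((\<lambda>t. E t a \<mu> \<nu>) \<longlongrightarrow> 0) at_top"
proof (cases "\<mu> \<in> L \<and> \<nu> \<in> L")
  case True
  have "((\<lambda>t. sqrt (hs_sq (E t a))) \<longlongrightarrow> 0) at_top"
    using tendsto_real_sqrt[OF hs_sq_expl_tendsto_0[OF a]] by simp
  then show ?thesis
    by (rule Lim_null_comparison[rotated]) (use True norm_entry_le_sqrt_hs_sq in auto)
qed (use a in \<open>simp add: expl_outside\<close>)

lemma expl_contraction:
  obtains T where "T > 0" "\<And>b. supported N b \<Longrightarrow> hs_sq (E T b) \<le> hs_sq b / 4"
proof -
  define G where "G t p \<mu> \<nu> = E t (matrix_unit (fst p) (snd p)) \<mu> \<nu>" for t p \<mu> \<nu>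
  define \<Psi> where "\<Psi> t = (\<Sum>\<mu>\<in>L. \<Sum>\<nu>\<in>L. (\<Sum>p\<in>L \<times> L. cmod (G t p \<mu> \<nu>))\<^sup>2)" for t
  have "(\<Psi> \<longlongrightarrow> (\<Sum>\<mu>\<in>L. \<Sum>\<nu>\<in>L. (\<Sum>p\<in>L \<times> L. cmod 0)\<^sup>2)) at_top"
    unfolding \<Psi>_def G_def
    by (intro tendsto_sum tendsto_power tendsto_norm expl_tendsto_0 supported_matrix_unit) auto
  then have "\<forall>\<^sub>F t in at_top. \<Psi> t < 1/4 \<and> t > 0"
    by (intro eventually_conj order_tendstoD(2) eventually_gt_at_top) auto
  then obtain T where T: "\<Psi> T < 1/4" "T > 0"
    using eventually_happens'[OF trivial_limit_at_top_linorder] by blast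
  have "hs_sq (E T b) \<le> hs_sq b / 4" if b: "supported N b" for b
  proof -
    have "cmod (E T b \<mu> \<nu>) \<le> sqrt (hs_sq b) * (\<Sum>p\<in>L \<times> L. cmod (G T p \<mu> \<nu>))" for \<mu> \<nu>
    proof -
      have "cmod (E T b \<mu> \<nu>) \<le> (\<Sum>p\<in>L \<times> L. cmod (b (fst p) (snd p) * G T p \<mu> \<nu>))"
        unfolding expl_matrix_unit_expansion[OF b] G_def by (rule norm_sum)
      also have "\<dots> \<le> (\<Sum>p\<in>L \<times> L. sqrt (hs_sq b) * cmod (G T p \<mu> \<nu>))"
        by (intro sum_mono) (auto simp: norm_mult intro!: mult_right_mono norm_entry_le_sqrt_hs_sq)
      finally show ?thesis by (simp add: sum_distrib_left)
    qed
    then have "hs_sq (E T b) \<le> (\<Sum>\<mu>\<in>L. \<Sum>\<nu>\<in>L. (sqrt (hs_sq b) * (\<Sum>p\<in>L \<times> L. cmod (G T p \<mu> \<nu>)))\<^sup>2)"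
      unfolding hs_sq_def by (intro sum_mono power_mono norm_ge_zero)
    also have "\<dots> = (\<Sum>\<mu>\<in>L. \<Sum>\<nu>\<in>L. hs_sq b * (\<Sum>p\<in>L \<times> L. cmod (G T p \<mu> \<nu>))\<^sup>2)"
      by (intro sum.cong refl) (simp add: power_mult_distrib hs_sq_nonneg)
    also have "\<dots> = hs_sq b * \<Psi> T"
      unfolding \<Psi>_def by (simp add: sum_distrib_left)
    also have "\<dots> \<le> hs_sq b * (1/4)"
      using T(1) hs_sq_nonneg[of b] by (intro mult_left_mono) auto
    finally show ?thesis by simp
  qed
  with T(2) show ?thesis using that by blast
qed

lemma hs_sq_expl_le_geometric:
  assumes T: "T \<ge> 0" "\<And>b. supported N b \<Longrightarrow> hs_sq (E T b) \<le> hs_sq b / 4" and b: "supported N b"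
  shows "hs_sq (E (real k * T) b) \<le> hs_sq b / 4 ^ k"
proof (induction k)
  case (Suc k)
  have "E (real (Suc k) * T) b = E T (E (real k * T) b)"
    using expl_add[OF b T(1), of "real k * T"] by (simp add: algebra_simps)
  then have "hs_sq (E (real (Suc k) * T) b) \<le> hs_sq (E (real k * T) b) / 4"
    using T(2)[OF supported_expl[OF b]] by simp
  also have "\<dots> \<le> hs_sq b / 4 ^ Suc k" using Suc by simp
  finally show ?case .
qed (simp add: expl_0)

lemma expl_exponential_decay:
  assumes b: "supported N b"
  shows "\<exists>\<alpha> C. \<alpha> > 0 \<and> (\<forall>t\<ge>0. \<forall>\<mu> \<nu>. cmod (E t b \<mu> \<nu>) \<le> C * exp (- \<alpha> * t))"
proof -
  obtain T where T: "T > 0" "\<And>b. supported N b \<Longrightarrow> hs_sq (E T b) \<le> hs_sq b / 4"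
    using expl_contraction by blast
  define \<alpha> where "\<alpha> = ln 2 / T"
  have "cmod (E t b \<mu> \<nu>) \<le> 2 * sqrt (hs_sq b) * exp (- \<alpha> * t)" if t: "t \<ge> 0" for t \<mu> \<nu>
  proof (cases "\<mu> \<in> L \<and> \<nu> \<in> L")
    case True
    define k where "k = nat \<lfloor>t / T\<rfloor>"
    have "real k * T \<le> t" unfolding k_def using t T(1)
      by (metis divide_nonneg_pos floor_divide_lower le_nat_floor nat_le_iff of_nat_nat zero_le_floor)
    then have decay: "hs_sq (E t b) \<le> hs_sq b / 4 ^ k"
      using hs_sq_orbit_antimono[OF is_orbit_expl[OF b]] hs_sq_expl_le_geometric[OF _ T(2) b, of k] T(1)
      by (meson less_imp_le order.trans)
    have "exp (ln 2 * (t / T - 1)) \<le> exp (ln 2 * real k)"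
      unfolding k_def using t T(1) by simp
    moreover have "exp (ln 2 * real k) = 2 ^ k"
      by (subst mult.commute) (simp add: exp_of_nat_mult)
    ultimately have "exp (\<alpha> * t) / 2 \<le> 2 ^ k"
      unfolding \<alpha>_def by (simp add: exp_diff right_diff_distrib)
    have "cmod (E t b \<mu> \<nu>) \<le> sqrt (hs_sq b / 4 ^ k)"
      using norm_entry_le_sqrt_hs_sq[OF True[THEN conjunct1] True[THEN conjunct2]] decay
      by (meson order.trans real_sqrt_le_iff)
    also have "\<dots> = sqrt (hs_sq b) / 2 ^ k"
      by (simp add: real_sqrt_divide real_sqrt_power)
    also have "\<dots> \<le> sqrt (hs_sq b) / (exp (\<alpha> * t) / 2)"
      using \<open>exp (\<alpha> * t) / 2 \<le> 2 ^ k\<close> hs_sq_nonneg by (intro divide_left_mono) auto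
    finally show ?thesis by (simp add: exp_minus field_simps)
  qed (use b hs_sq_nonneg in \<open>simp add: expl_outside\<close>)
  moreover have "\<alpha> > 0" unfolding \<alpha>_def using T(1) by simp
  ultimately show ?thesis by blast
qed

lemma absolutely_integrable_expl:
  assumes b: "supported N b"
  shows "(\<lambda>t. E t b \<mu> \<nu>) absolutely_integrable_on {0..}"
proof -
  obtain \<alpha> C where "\<alpha> > 0" and bound: "\<And>t \<mu> \<nu>. t \<ge> 0 \<Longrightarrow> cmod (E t b \<mu> \<nu>) \<le> C * exp (- \<alpha> * t)"
    using expl_exponential_decay[OF b] by blast
  show ?thesis
  proof (rule measurable_bounded_by_integrable_imp_absolutely_integrable)
    have "continuous_on {0..} (\<lambda>t. E t b \<mu> \<nu>)"
      by (intro continuous_at_imp_continuous_on ballI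
          has_vector_derivative_continuous[OF expl_has_vector_derivative[OF b]])
    then show "(\<lambda>t. E t b \<mu> \<nu>) \<in> borel_measurable (lebesgue_on {0..})"
      by (rule continuous_imp_measurable_on_sets_lebesgue) simp
    show "(\<lambda>t. C * exp (- \<alpha> * t)) integrable_on {0..}"
      using integrable_on_cmult_left[OF integrable_on_exp_minus_to_infinity[OF \<open>\<alpha> > 0\<close>, of 0]]
      by simp
    show "norm (E t b \<mu> \<nu>) \<le> C * exp (- \<alpha> * t)" if "t \<in> {0..}" for t
      using bound that by simp
  qed simp
qed

lemma integrable_expl: "supported N b \<Longrightarrow> (\<lambda>t. E t b \<mu> \<nu>) integrable_on {0..}"
  using absolutely_integrable_expl set_lebesgue_integral_eq_integral(1) by blast

lemma integral_expl_lind: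
  assumes b: "supported N b"
  shows "integral {0..} (\<lambda>t. E t (l b) \<mu> \<nu>) = - b \<mu> \<nu>"
proof -
  have "integral {0..} (\<lambda>t. E t (l b) \<mu> \<nu>) = 0 - E 0 b \<mu> \<nu>"
  proof (rule integral_derivative_halfline)
    show "((\<lambda>t. E t b \<mu> \<nu>) has_vector_derivative E t (l b) \<mu> \<nu>) (at t within {0..})" for t
      using expl_has_vector_derivative[OF b] expl_lind_commute[OF b] by simp
  qed (use b in \<open>simp_all add: absolutely_integrable_expl supported_lind expl_tendsto_0\<close>)
  then show ?thesis by (simp add: expl_0)
qed

lemma lind_inj:
  assumes a: "supported N a" and b: "supported N b" and eq: "l a = l b"
  shows "a = b"
proof (intro ext)
  fix \<mu> \<nu>
  let ?d = "\<lambda>\<mu> \<nu>. a \<mu> \<nu> - b \<mu> \<nu>"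
  have d: "supported N ?d" using a b unfolding supported_def by auto
  have stationary: "l ?d = (\<lambda>\<mu> \<nu>. 0)" using lind_diff[OF a b] eq by simp
  have "\<forall>\<^sub>F t in at_top. E t ?d \<mu> \<nu> = ?d \<mu> \<nu>"
    using eventually_ge_at_top[of "0::real"] by eventually_elim (simp add: expl_fixed_point[OF d stationary])
  from Lim_transform_eventually[OF expl_tendsto_0[OF d] this]
  have "((\<lambda>t::real. ?d \<mu> \<nu>) \<longlongrightarrow> 0) at_top" .
  then show "a \<mu> \<nu> = b \<mu> \<nu>" by (simp add: tendsto_const_iff)
qed

definition orbit_integral :: "cmat \<Rightarrow> cmat" where
  "orbit_integral b = (\<lambda>\<mu> \<nu>. integral {0..} (\<lambda>t. E t b \<mu> \<nu>))"

lemma supported_orbit_integral: "supported N b \<Longrightarrow> supported N (orbit_integral b)"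
  unfolding orbit_integral_def supported_def using expl_outside[unfolded supported_def] by simp

lemma lind_orbit_integral:
  assumes b: "supported N b"
  shows "l (orbit_integral b) = (\<lambda>\<mu> \<nu>. - b \<mu> \<nu>)"
proof (intro ext)
  fix \<mu> \<nu>
  show "l (orbit_integral b) \<mu> \<nu> = - b \<mu> \<nu>"
  proof (cases "\<mu> \<in> L \<and> \<nu> \<in> L")
    case True
    have int: "(\<lambda>t. K \<mu> \<nu> \<kappa> \<rho> * E t b \<kappa> \<rho>) integrable_on {0..}" for \<kappa> \<rho>
      by (intro integrable_on_mult_right integrable_expl b)
    have "l (orbit_integral b) \<mu> \<nu> = (\<Sum>\<kappa>\<in>L. \<Sum>\<rho>\<in>L. K \<mu> \<nu> \<kappa> \<rho> * orbit_integral b \<kappa> \<rho>)"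
      using True by (intro lind_eq_coeff_sum supported_orbit_integral b) auto
    also have "\<dots> = (\<Sum>\<kappa>\<in>L. \<Sum>\<rho>\<in>L. integral {0..} (\<lambda>t. K \<mu> \<nu> \<kappa> \<rho> * E t b \<kappa> \<rho>))"
      by (simp add: orbit_integral_def)
    also have "\<dots> = integral {0..} (\<lambda>t. \<Sum>\<kappa>\<in>L. \<Sum>\<rho>\<in>L. K \<mu> \<nu> \<kappa> \<rho> * E t b \<kappa> \<rho>)"
      by (simp add: integral_sum finite_lattice int integrable_sum)
    also have "\<dots> = integral {0..} (\<lambda>t. E t (l b) \<mu> \<nu>)"
      using True by (simp add: lind_eq_coeff_sum supported_expl b expl_lind_commute)
    also have "\<dots> = - b \<mu> \<nu>" by (rule integral_expl_lind[OF b])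
    finally show ?thesis .
  qed (use b in \<open>simp add: lind_outside supported_orbit_integral supported_outside\<close>)
qed

lemma
  assumes b: "supported N b"
  shows supported_neg_orbit_integral: "supported N (\<lambda>\<mu> \<nu>. - orbit_integral b \<mu> \<nu>)"
    and lind_neg_orbit_integral: "l (\<lambda>\<mu> \<nu>. - orbit_integral b \<mu> \<nu>) = b"
  using supported_orbit_integral[OF b] lind_uminus[OF supported_orbit_integral[OF b]]
  by (simp_all add: supported_def lind_orbit_integral[OF b])

lemma linv_eq_orbit_integral:
  assumes b: "supported N b"
  shows "linv N v zl zr \<beta> b = (\<lambda>\<mu> \<nu>. - orbit_integral b \<mu> \<nu>)"
  unfolding linv_def
proof (rule the_equality)
  fix a assume "supported N a \<and> l a = b"
  then show "a = (\<lambda>\<mu> \<nu>. - orbit_integral b \<mu> \<nu>)"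
    using lind_inj supported_neg_orbit_integral[OF b] lind_neg_orbit_integral[OF b] by simp
qed (simp add: supported_neg_orbit_integral[OF b] lind_neg_orbit_integral[OF b])

lemma ex1_lind_preimage: "supported N b \<Longrightarrow> \<exists>!a. supported N a \<and> l a = b"
  using supported_neg_orbit_integral lind_neg_orbit_integral lind_inj by blast

lemma adj_eq_of_lind_adj_eq:
  assumes a: "supported N a" and "adj (l a) = l a"
  shows "adj a = a"
proof (rule lind_inj[OF supported_adj[OF a] a])
  show "l (adj a) = l a" using assms(2) by (simp add: lind_adj[OF a])
qed

lemma supported_linv: "supported N b \<Longrightarrow> supported N (linv N v zl zr \<beta> b)"
  by (simp add: linv_eq_orbit_integral supported_neg_orbit_integral)

lemma lind_linv: "supported N b \<Longrightarrow> l (linv N v zl zr \<beta> b) = b"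
  by (simp add: linv_eq_orbit_integral lind_neg_orbit_integral)

lemma Rinf_eq_orbit_integral: "Rinf N v zl zr \<beta> ail air = orbit_integral (source N ail air)"
  unfolding Rinf_def orbit_integral_def source_def ..

lemma adj_orbit_integral_source:
  "adj (orbit_integral (source N ail air)) = orbit_integral (source N ail air)"
proof (rule adj_eq_of_lind_adj_eq[OF supported_orbit_integral[OF supported_source]])
  have "adj (source N ail air) = source N ail air"
    unfolding adj_def source_def P1_apply PN_apply by (intro ext) auto
  then show "adj (l (orbit_integral (source N ail air))) = l (orbit_integral (source N ail air))"
    unfolding lind_orbit_integral[OF supported_source] adj_def by (metis complex_cnj_minus)
qed

lemma lind_orbit_integral_source_diag:
  fixes ail air :: real
  assumes \<nu>: "\<nu> \<in> L" "\<nu>!0 < N!0"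
  defines "R \<equiv> orbit_integral (source N ail air)"
  shows "- \<i> * (mmul N (ham N v) R \<nu> \<nu> - mmul N R (ham N v) \<nu> \<nu>)
      - of_bool (\<nu> \<in> slice N 1) * (2 * complex_of_real zl * R \<nu> \<nu>)
      = - of_bool (\<nu> \<in> slice N 1) * (2 * complex_of_real ail)"
proof -
  have R: "supported N R" unfolding R_def by (rule supported_orbit_integral[OF supported_source])
  have "\<nu> \<notin> slice N (N!0)" using \<nu> unfolding slice_def by auto
  moreover have "l R \<nu> \<nu> = - source N ail air \<nu> \<nu>"
    unfolding R_def lind_orbit_integral[OF supported_source] ..
  ultimately show ?thesis
    using \<nu>(1) unfolding lind_apply[OF R]
    by (cases "\<nu> \<in> slice N 1") (simp_all add: damping_def source_def P1_apply PN_apply mult_ac)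
qed

lemma current_eq:
  assumes n: "1 \<le> n" "n < N!0"
  shows "complex_of_real (current N v zl zr \<beta> ail air n)
     = 2 * complex_of_real ail * of_nat (card (slice N 1))
       - 2 * complex_of_real zl * tr N (mmul N (P1 N) (orbit_integral (source N ail air)))"
proof -
  define R where "R = orbit_integral (source N ail air)"
  define U where "U = {\<nu>\<in>L. \<nu>!0 \<le> n}"
  have fU: "finite U" and M1U: "slice N 1 \<subseteq> U"
    unfolding U_def slice_def using finite_lattice n by auto
  have restrict: "(\<Sum>\<nu>\<in>U. of_bool (\<nu> \<in> slice N 1) * f \<nu>) = (\<Sum>\<nu>\<in>slice N 1. f \<nu>)" for f :: "site \<Rightarrow> complex"
    using fU M1U by (simp add: Int_absorb1)
  have "(\<Sum>\<nu>\<in>U. mmul N (ham N v) R \<nu> \<nu> - mmul N R (ham N v) \<nu> \<nu>)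
      = (\<Sum>\<nu>\<in>slice N n. cnj (R (splus \<nu>) \<nu>) - R (splus \<nu>) \<nu>)"
    unfolding U_def commutator_flux[OF N_nonempty n(2)]
    using adj_orbit_integral_source[of ail air] unfolding R_def adj_def by metis
  also have "\<dots> = - \<i> * complex_of_real (current N v zl zr \<beta> ail air n)"
    unfolding current_def Rinf_eq_orbit_integral R_def
    by (simp add: sum_distrib_left complex_eq_iff Re_sum Im_sum)
  finally have flux: "(\<Sum>\<nu>\<in>U. - \<i> * (mmul N (ham N v) R \<nu> \<nu> - mmul N R (ham N v) \<nu> \<nu>))
      = - complex_of_real (current N v zl zr \<beta> ail air n)"
    by (simp add: sum_negf sum_distrib_left[symmetric])
  have "(\<Sum>\<nu>\<in>U. - \<i> * (mmul N (ham N v) R \<nu> \<nu> - mmul N R (ham N v) \<nu> \<nu>)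
      - of_bool (\<nu> \<in> slice N 1) * (2 * complex_of_real zl * R \<nu> \<nu>))
      = (\<Sum>\<nu>\<in>U. - of_bool (\<nu> \<in> slice N 1) * (2 * complex_of_real ail))"
    using n unfolding R_def U_def by (intro sum.cong refl lind_orbit_integral_source_diag) auto
  then have "- complex_of_real (current N v zl zr \<beta> ail air n)
      - 2 * complex_of_real zl * (\<Sum>\<nu>\<in>slice N 1. R \<nu> \<nu>)
      = - 2 * complex_of_real ail * of_nat (card (slice N 1))"
    unfolding sum_subtractf flux using restrict[of "\<lambda>\<nu>. 2 * complex_of_real zl * R \<nu> \<nu>"]
      restrict[of "\<lambda>_. - 2 * complex_of_real ail"]
    by (simp add: sum_distrib_left[symmetric])
  then show ?thesis unfolding tr_mmul_P1 R_def by (simp add: algebra_simps)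
qed

lemma lind_projS_lattice:
  "l (projS L) = (\<lambda>\<mu> \<nu>. - 2 * complex_of_real zl * P1 N \<mu> \<nu> - 2 * complex_of_real zr * PN N \<mu> \<nu>)"
proof (intro ext)
  fix \<mu> \<nu>
  have I: "supported N (projS L)" by (simp add: supported_def projS_apply finite_lattice)
  have "mmul N (ham N v) (projS L) \<mu> \<nu> = mmul N (projS L) (ham N v) \<mu> \<nu>"
    by (simp add: mmul_projS_left mmul_projS_right finite_lattice ham_outside)
  then show "l (projS L) \<mu> \<nu> = - 2 * complex_of_real zl * P1 N \<mu> \<nu> - 2 * complex_of_real zr * PN N \<mu> \<nu>"
    using slice_subset_lattice
    by (auto simp: lind_apply[OF I] projS_apply finite_lattice damping_def P1_apply PN_apply)
qed

lemma linv_comb: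
  assumes "supported N a" "l a = (\<lambda>\<mu> \<nu>. x * P1 N \<mu> \<nu> + y * PN N \<mu> \<nu>)"
  shows "a = (\<lambda>\<mu> \<nu>. x * linv N v zl zr \<beta> (P1 N) \<mu> \<nu> + y * linv N v zl zr \<beta> (PN N) \<mu> \<nu>)"
proof (rule lind_inj[OF assms(1)])
  show "supported N (\<lambda>\<mu> \<nu>. x * linv N v zl zr \<beta> (P1 N) \<mu> \<nu> + y * linv N v zl zr \<beta> (PN N) \<mu> \<nu>)"
    using supported_linv[OF supported_P1] supported_linv[OF supported_PN]
    unfolding supported_def by simp
  show "l a = l (\<lambda>\<mu> \<nu>. x * linv N v zl zr \<beta> (P1 N) \<mu> \<nu> + y * linv N v zl zr \<beta> (PN N) \<mu> \<nu>)"
    unfolding lind_lincomb2[OF supported_linv[OF supported_P1] supported_linv[OF supported_PN]]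
      lind_linv[OF supported_P1] lind_linv[OF supported_PN] assms(2) ..
qed

text \<open>Both the identity and \<open>R\<^sub>\<infinity>\<close> are combinations of \<open>l\<^sup>-\<^sup>1(P\<^sub>1)\<close> and \<open>l\<^sup>-\<^sup>1(P\<^sub>N\<^sub>1)\<close>; comparing their
  traces against \<open>P\<^sub>1\<close> in the stationarity identity eliminates \<open>l\<^sup>-\<^sup>1(P\<^sub>1)\<close>.\<close>

lemma current_eq_trace_linv:
  assumes N0: "2 \<le> N!0" and zl: "zl = ail + aol" and zr: "zr = air + aor"
  shows "complex_of_real (current N v zl zr \<beta> ail air 1)
     = - 4 * complex_of_real (ail * aor - aol * air) * tr N (mmul N (P1 N) (linv N v zl zr \<beta> (PN N)))"
proof -
  define TA where "TA = tr N (mmul N (P1 N) (linv N v zl zr \<beta> (P1 N)))"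
  define TB where "TB = tr N (mmul N (P1 N) (linv N v zl zr \<beta> (PN N)))"
  have "projS L = (\<lambda>\<mu> \<nu>. (- 2 * complex_of_real zl) * linv N v zl zr \<beta> (P1 N) \<mu> \<nu>
      + (- 2 * complex_of_real zr) * linv N v zl zr \<beta> (PN N) \<mu> \<nu>)"
    by (rule linv_comb) (simp_all add: supported_def projS_apply finite_lattice lind_projS_lattice)
  moreover have "tr N (mmul N (P1 N) (projS L)) = of_nat (card (slice N 1))"
    using slice_subset_lattice[of N 1] by (simp add: tr_mmul_P1 projS_apply finite_lattice subset_iff)
  ultimately have card: "of_nat (card (slice N 1)) = - 2 * complex_of_real zl * TA - 2 * complex_of_real zr * TB"
    unfolding TA_def TB_def by (simp add: tr_mmul_P1 sum_subtractf sum_distrib_left)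
  have "orbit_integral (source N ail air) = (\<lambda>\<mu> \<nu>. (- 2 * complex_of_real ail) * linv N v zl zr \<beta> (P1 N) \<mu> \<nu>
      + (- 2 * complex_of_real air) * linv N v zl zr \<beta> (PN N) \<mu> \<nu>)"
    by (rule linv_comb[OF supported_orbit_integral[OF supported_source]])
       (unfold lind_orbit_integral[OF supported_source], simp add: source_def)
  then have R: "tr N (mmul N (P1 N) (orbit_integral (source N ail air)))
      = - 2 * complex_of_real ail * TA - 2 * complex_of_real air * TB"
    unfolding TA_def TB_def by (simp add: tr_mmul_P1 sum_subtractf sum_distrib_left)
  have "(1::nat) < N!0" using N0 by simp
  from current_eq[OF order.refl this, of ail air]
  have "complex_of_real (current N v zl zr \<beta> ail air 1)
      = 2 * complex_of_real ail * (- 2 * complex_of_real zl * TA - 2 * complex_of_real zr * TB)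
        - 2 * complex_of_real zl * (- 2 * complex_of_real ail * TA - 2 * complex_of_real air * TB)"
    by (simp only: card R)
  then show ?thesis
    unfolding TB_def[symmetric] by (simp add: zl zr algebra_simps)
qed

lemma integral_tr_expl_PN:
  "integral {0..} (\<lambda>t. tr N (mmul N (P1 N) (E t (PN N))))
     = - tr N (mmul N (P1 N) (linv N v zl zr \<beta> (PN N)))"
  unfolding tr_mmul_P1 linv_eq_orbit_integral[OF supported_PN] orbit_integral_def
  by (simp add: integral_sum finite_slice integrable_expl supported_PN sum_negf)

end

theorem mainTheorem17:
  fixes N :: "nat list" and v :: "site \<Rightarrow> real"
    and ail aol air aor \<beta> :: real
  assumes "N \<noteq> []" and "\<forall>i<length N. 1 \<le> N!i" and "2 \<le> N!0"
    and "ail \<ge> 0" and "aol \<ge> 0" and "air \<ge> 0" and "aor \<ge> 0" and "\<beta> \<ge> 0"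
    and "ail + aol > 0" and "air + aor > 0"
  shows "(\<forall>a. supported N a \<longrightarrow> (\<forall>\<mu> \<nu>.
            ((\<lambda>t. expl N v (ail + aol) (air + aor) \<beta> t a \<mu> \<nu>) \<longlongrightarrow> 0) at_top))
    \<and> (\<forall>n\<in>{1..<N!0}. current N v (ail + aol) (air + aor) \<beta> ail air n
                     = current N v (ail + aol) (air + aor) \<beta> ail air 1)
    \<and> (\<exists>!a. supported N a \<and> lind N v (ail + aol) (air + aor) \<beta> a = PN N)
    \<and> complex_of_real (current N v (ail + aol) (air + aor) \<beta> ail air 1)
        = 4 * complex_of_real (ail * aor - aol * air) *
          integral {0..} (\<lambda>t. tr N (mmul N (P1 N) (expl N v (ail + aol) (air + aor) \<beta> t (PN N))))
    \<and> complex_of_real (current N v (ail + aol) (air + aor) \<beta> ail air 1)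
        = - 4 * complex_of_real (ail * aor - aol * air) *
          tr N (mmul N (P1 N) (linv N v (ail + aol) (air + aor) \<beta> (PN N)))"
proof -
  interpret driven_lattice N v "ail + aol" "air + aor" \<beta>
    by unfold_locales (use assms in auto)
  have J: "complex_of_real (current N v (ail + aol) (air + aor) \<beta> ail air 1)
      = - 4 * complex_of_real (ail * aor - aol * air) *
        tr N (mmul N (P1 N) (linv N v (ail + aol) (air + aor) \<beta> (PN N)))"
    by (rule current_eq_trace_linv) (use assms(3) in auto)
  have "current N v (ail + aol) (air + aor) \<beta> ail air n = current N v (ail + aol) (air + aor) \<beta> ail air 1"
    if "n \<in> {1..<N!0}" for n
  proof -
    have "complex_of_real (current N v (ail + aol) (air + aor) \<beta> ail air n)
        = complex_of_real (current N v (ail + aol) (air + aor) \<beta> ail air 1)"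
      using current_eq[of n ail air] current_eq[of 1 ail air] that assms(3) by simp
    then show ?thesis by simp
  qed
  moreover have "complex_of_real (current N v (ail + aol) (air + aor) \<beta> ail air 1)
      = 4 * complex_of_real (ail * aor - aol * air) *
        integral {0..} (\<lambda>t. tr N (mmul N (P1 N) (expl N v (ail + aol) (air + aor) \<beta> t (PN N))))"
    unfolding J integral_tr_expl_PN by (simp add: algebra_simps)
  ultimately show ?thesis
    using expl_tendsto_0 ex1_lind_preimage[OF supported_PN] J by blast
qed

end
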